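(* Fix a supervised example $(x^*,y^* )$ and $q\in[0,1]$. Draw $z^{(1)},\dots,z^{(M)}$ i.i.d. from $p_\theta(\cdot\mid x^* )$ and set $$w_m\triangleq p_\theta(y^*\mid x^*,z^{(m)})\in[0,1],\qquad g_m\triangleq-w_m\,\nabla_\theta\log p_\theta(z^{(m)},y^*\mid x^* ),$$ $\bar w_M=\frac1M\sum_mw_m$, $\bar g_M=\frac1M\sum_mg_m$, and the estimator $\hat\nabla_\theta\ell_q\triangleq\bar g_M/(\bar w_M)^q$. Assume (1) $P_\theta>0$; (2) $\mathbb{E}[\|g_m\|^2]<\infty$; (3) $w_m\ge\varepsilon$ almost surely for some $\varepsilon>0$; and that differentiation and summation over $z$ may be interchanged, so that $\mathbb{E}[w_m]=P_\theta$ and $\mathbb{E}[g_m]=-\nabla_\theta P_\theta$. Then $\hat\nabla_\theta\ell_q\to\nabla_\theta\ell_q$ almost surely as $M\to\infty$, and $$\mathbb{E}\big[\hat\nabla_\theta\ell_q\big]-\nabla_\theta\ell_q=\frac{q}{M\,P_\theta^{q+1}}\left[\frac{q+1}{2}\,\nabla_\theta\ell_1\,\mathrm{Var}(w_m)-\mathrm{Cov}(g_m,w_m)\right]+O(M^{-2})\quad(M\to\infty),$$ where $\nabla_\theta\ell_1=-\nabla_\theta\log P_\theta$ and $\mathrm{Cov}(g_m,w_m)=\mathbb{E}[(g_m-\mathbb{E}g_m)(w_m-\mathbb{E}w_m)]\in\mathbb{R}^d$. Moreover, if in addition $\|\nabla_\theta\log P_\theta\|\le C$ and $\|\nabla_\theta\log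 p_\theta(z,y^*\mid x^* )\|\le C'$ for all $z$, then the leading term has norm at most $(C+C')\,\dfrac{q}{M\,P_\theta^{q}}$; i.e. the bias is $O\!\big(q/(MP_\theta^q)\big)+O(M^{-2})$. For $q=0$ the estimator is exactly unbiased for every $M$.
   Context: $p_\theta$ is a model with parameters $\theta\in\mathbb{R}^d$ that samples a latent $z$ (from a countable set) from $p_\theta(\cdot\mid x)$ and an output from $p_\theta(\cdot\mid x,z)$; $P_\theta\triangleq p_\theta(y^*\mid x^* )=\sum_z p_\theta(z,y^*\mid x^* )$. The Tsallis $q$-logarithm is $\log_q(u)=\frac{u^{1-q}-1}{1-q}$ ($q<1$), $\log_1(u)=\log u$, and $\ell_q\triangleq-\log_q P_\theta$, so $\nabla_\theta\ell_q=-P_\theta^{-q}\nabla_\theta P_\theta$. *)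

theory Defs
  imports "HOL-Probability.Probability" "HOL-Library.Landau_Symbols"
begin

definition marg :: "('a \<Rightarrow> 'z pmf) \<Rightarrow> ('a \<Rightarrow> 'z \<Rightarrow> real) \<Rightarrow> 'a \<Rightarrow> real" where
  "marg pz w \<theta> = (\<Sum>\<^sub>\<infinity>z. pmf (pz \<theta>) z * w \<theta> z)"

text \<open>Gradient of the Tsallis loss: grad l_q = - P^(-q) grad P.\<close>
definition grad_ell :: "real \<Rightarrow> real \<Rightarrow> 'a::real_vector \<Rightarrow> 'a" where
  "grad_ell q P DP = - ((P powr (-q)) *\<^sub>R DP)"

definition est :: "real \<Rightarrow> ('z \<Rightarrow> real) \<Rightarrow> ('z \<Rightarrow> 'a::real_vector) \<Rightarrow> (nat \<Rightarrow> 'w \<Rightarrow> 'z) \<Rightarrow> nat \<Rightarrow> 'w \<Rightarrow> 'a" where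
  "est q wt gt Z M \<omega> =
     (let wb = (\<Sum>m<M. wt (Z m \<omega>)) / real M;
          gb = (1 / real M) *\<^sub>R (\<Sum>m<M. gt (Z m \<omega>))
      in (1 / (wb powr q)) *\<^sub>R gb)"

definition rvar :: "'w measure \<Rightarrow> ('w \<Rightarrow> real) \<Rightarrow> real" where
  "rvar S f = integral\<^sup>L S (\<lambda>\<omega>. (f \<omega> - integral\<^sup>L S f)\<^sup>2)"

definition rcov :: "'w measure \<Rightarrow> ('w \<Rightarrow> 'a::{banach,second_countable_topology}) \<Rightarrow> ('w \<Rightarrow> real) \<Rightarrow> 'a" where
  "rcov S g f = integral\<^sup>L S (\<lambda>\<omega>. (f \<omega> - integral\<^sup>L S f) *\<^sub>R (g \<omega> - integral\<^sup>L S g))"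

definition lead_term :: "real \<Rightarrow> real \<Rightarrow> 'a::real_vector \<Rightarrow> real \<Rightarrow> 'a \<Rightarrow> nat \<Rightarrow> 'a" where
  "lead_term q P DP V Cv M =
     (q / (real M * P powr (q + 1))) *\<^sub>R (((q + 1) / 2 * V) *\<^sub>R grad_ell 1 P DP - Cv)"

end

(* Write the two sample means as P + u and E g + h, where u and h are sample means of the
   centred weights and gradients.  Expanding x powr (-q) to third order around P, with a Lagrange
   remainder that is uniform because the weights stay in [eps, 1], reduces the bias to moments of
   u and h: E u^2 = Var(w)/M and E[h u] = Cov(g, w)/M exactly, whereas the third and fourth mixed
   moments are O(M^-2), because independence kills every term of the expanded product in which
   some sample index occurs only once.  Almost sure convergence is the strong law of large numbers
   (Chebyshev and Borel-Cantelli along the squares k^2, monotone interpolation in between)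
   combined with continuity of x powr (-q). *)

theory Submission
  imports Defs "HOL-Library.Discrete_Functions"
begin

lemma inverse_powr_taylor3:
  fixes a q P :: real
  assumes a_pos: "0 < a" and a_le_P: "a \<le> P" and q_nonneg: "0 \<le> q"
  obtains c K where "0 \<le> K" and "\<And>x. a \<le> x \<Longrightarrow>
    \<bar>1 / x powr q - (P powr (-q) - q * P powr (-q-1) * (x - P)
        + q * (q + 1) / 2 * P powr (-q-2) * (x - P)^2 + c * (x - P)^3)\<bar> \<le> K * (x - P)^4"
proof -
  define d where "d m x = (\<Prod>k<m. (-q - real k)) * x powr (-q - real m)" for m x
  define K where "K = q * (q + 1) * (q + 2) * (q + 3) / 24 * a powr (-q - 4)"
  have K_nonneg: "0 \<le> K"
    using q_nonneg by (simp add: K_def)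
  have d_deriv: "DERIV (d m) t :> d (Suc m) t" if "0 < t" for m t
  proof -
    have "DERIV (\<lambda>x. x powr (-q - real m)) t :> (-q - real m) * t powr (-q - real m - 1)"
      by (rule has_real_derivative_powr[OF that])
    then have "DERIV (d m) t :> (\<Prod>k<m. (-q - real k)) * ((-q - real m) * t powr (-q - real m - 1))"
      unfolding d_def by (rule DERIV_cmult)
    then show ?thesis
      by (simp add: d_def algebra_simps)
  qed
  have d4_le: "\<bar>d 4 t / fact 4\<bar> \<le> K" if "a \<le> t" for t
  proof -
    have "(\<Prod>k<4. (-q - real k)) = q * (q + 1) * (q + 2) * (q + 3)"
      by (simp add: eval_nat_numeral algebra_simps)
    then have "\<bar>d 4 t\<bar> = q * (q + 1) * (q + 2) * (q + 3) * t powr (-q - 4)"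
      using q_nonneg by (simp add: d_def abs_mult)
    also have "\<dots> \<le> q * (q + 1) * (q + 2) * (q + 3) * a powr (-q - 4)"
      by (intro mult_left_mono powr_mono2') (use that a_pos q_nonneg in auto)
    finally show ?thesis
      by (simp add: K_def fact_numeral)
  qed
  have "\<bar>1 / x powr q - (P powr (-q) - q * P powr (-q-1) * (x - P)
        + q * (q + 1) / 2 * P powr (-q-2) * (x - P)^2 + d 3 P / fact 3 * (x - P)^3)\<bar> \<le> K * (x - P)^4"
    if x: "a \<le> x" for x
  proof (cases "x = P")
    case True
    then show ?thesis
      using a_pos a_le_P by (simp add: powr_minus_divide)
  next
    case False
    obtain t where t: "if x < P then x < t \<and> t < P else P < t \<and> t < x"
      and taylor: "d 0 x = (\<Sum>m<4. d m P / fact m * (x - P)^m) + d 4 t / fact 4 * (x - P)^4"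
      using Taylor[of 4 d "d 0" a "max x P" P x] d_deriv a_pos a_le_P x False by fastforce
    have "a \<le> t"
      using t x a_le_P by (auto split: if_splits)
    then have "\<bar>d 4 t / fact 4\<bar> * (x - P)^4 \<le> K * (x - P)^4"
      by (intro mult_right_mono d4_le) auto
    then have remainder_le: "\<bar>d 4 t / fact 4 * (x - P)^4\<bar> \<le> K * (x - P)^4"
      by (simp add: abs_mult)
    have sum_eq: "(\<Sum>m<4. d m P / fact m * (x - P)^m) = P powr (-q) - q * P powr (-q-1) * (x - P)
        + q * (q + 1) / 2 * P powr (-q-2) * (x - P)^2 + d 3 P / fact 3 * (x - P)^3"
      by (simp add: d_def eval_nat_numeral fact_numeral algebra_simps)
    have d0: "d 0 x = 1 / x powr q"
      by (simp add: d_def powr_minus_divide)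
    have expand: "1 / x powr q = (P powr (-q) - q * P powr (-q-1) * (x - P)
        + q * (q + 1) / 2 * P powr (-q-2) * (x - P)^2 + d 3 P / fact 3 * (x - P)^3)
        + d 4 t / fact 4 * (x - P)^4"
      using taylor by (simp only: d0 sum_eq)
    show ?thesis
      using remainder_le by (subst expand) (simp only: add_diff_cancel_left')
  qed
  then show thesis
    using that K_nonneg by blast
qed

lemma abs_cubic_remainder_product_le:
  fixes m c K h u r :: real
  assumes u_le: "\<bar>u\<bar> \<le> 1" and "0 \<le> K" and r_le: "\<bar>r\<bar> \<le> K * u^4"
  shows "\<bar>m * r + c * (h * u^3) + h * r\<bar> \<le> \<bar>m\<bar> * K * u^4 + (\<bar>c\<bar> + K) * ((h * u)^2 + u^4) / 2"
proof -
  have "0 \<le> (\<bar>h\<bar> * \<bar>u\<bar> - u^2)^2"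
    by simp
  then have am_gm: "\<bar>h\<bar> * \<bar>u\<bar>^3 \<le> ((h * u)^2 + u^4) / 2"
    by (simp add: power2_eq_square power3_eq_cube power4_eq_xxxx algebra_simps)
  have "\<bar>u\<bar>^4 \<le> \<bar>u\<bar>^3"
    using power_decreasing[of 3 4 "\<bar>u\<bar>"] u_le by simp
  then have "K * u^4 \<le> K * \<bar>u\<bar>^3"
    using \<open>0 \<le> K\<close> by (simp add: mult_left_mono power_abs)
  then have "\<bar>h * r\<bar> \<le> K * (\<bar>h\<bar> * \<bar>u\<bar>^3)"
    using r_le mult_left_mono[of "\<bar>r\<bar>" "K * \<bar>u\<bar>^3" "\<bar>h\<bar>"] by (simp add: abs_mult mult_ac)
  moreover have "\<bar>m * r\<bar> \<le> \<bar>m\<bar> * K * u^4"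
    using r_le by (simp add: abs_mult mult_left_mono mult.assoc)
  moreover have "\<bar>c * (h * u^3)\<bar> = \<bar>c\<bar> * (\<bar>h\<bar> * \<bar>u\<bar>^3)"
    by (simp add: abs_mult power_abs)
  moreover have "\<bar>m * r + c * (h * u^3) + h * r\<bar> \<le> \<bar>m * r\<bar> + \<bar>c * (h * u^3)\<bar> + \<bar>h * r\<bar>"
    by (rule order_trans[OF abs_triangle_ineq add_right_mono[OF abs_triangle_ineq]])
  ultimately have "\<bar>m * r + c * (h * u^3) + h * r\<bar> \<le> \<bar>m\<bar> * K * u^4 + (\<bar>c\<bar> + K) * (\<bar>h\<bar> * \<bar>u\<bar>^3)"
    by (simp add: distrib_right)
  also have "\<dots> \<le> \<bar>m\<bar> * K * u^4 + (\<bar>c\<bar> + K) * (((h * u)^2 + u^4) / 2)"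
    using am_gm \<open>0 \<le> K\<close> by (intro add_left_mono mult_left_mono) auto
  finally show ?thesis
    by simp
qed

lemma (in prob_space) expectation_cubic_expansion_product:
  fixes u h Y :: "'a \<Rightarrow> real"
  assumes [measurable]: "u \<in> borel_measurable M" "h \<in> borel_measurable M" "Y \<in> borel_measurable M"
    and u_le: "\<And>x. \<bar>u x\<bar> \<le> 1" and K_nonneg: "0 \<le> K"
    and Y_approx: "\<And>x. \<bar>Y x - (c0 + c1 * u x + c2 * (u x)^2 + c3 * (u x)^3)\<bar> \<le> K * (u x)^4"
    and int_h: "integrable M h" and int_hu_sq: "integrable M (\<lambda>x. (h x * u x)^2)"
    and E_u: "expectation u = 0" and E_h: "expectation h = 0"
  shows "\<bar>expectation (\<lambda>x. Y x * (m + h x))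
            - (m * c0 + m * c2 * expectation (\<lambda>x. (u x)^2) + c1 * expectation (\<lambda>x. h x * u x))\<bar>
         \<le> \<bar>m * c3\<bar> * \<bar>expectation (\<lambda>x. (u x)^3)\<bar> + \<bar>c2\<bar> * \<bar>expectation (\<lambda>x. h x * (u x)^2)\<bar>
           + \<bar>m\<bar> * K * expectation (\<lambda>x. (u x)^4)
           + (\<bar>c3\<bar> + K) / 2 * (expectation (\<lambda>x. (h x * u x)^2) + expectation (\<lambda>x. (u x)^4))"
proof -
  define R where "R x = Y x - (c0 + c1 * u x + c2 * (u x)^2 + c3 * (u x)^3)" for x
  \<comment> \<open>main has an explicit expectation, err1 is controlled by third moments, err2 by fourth moments.\<close>
  define main where "main = (\<lambda>x. m * c0 + m * c1 * u x + c0 * h x + m * c2 * (u x)^2 + c1 * (h x * u x))"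
  define err1 where "err1 = (\<lambda>x. m * c3 * (u x)^3 + c2 * (h x * (u x)^2))"
  define err2 where "err2 = (\<lambda>x. m * R x + c3 * (h x * (u x)^3) + h x * R x)"
  define bound where "bound = (\<lambda>x. \<bar>m\<bar> * K * (u x)^4 + (\<bar>c3\<bar> + K) * ((h x * u x)^2 + (u x)^4) / 2)"
  have [measurable]: "R \<in> borel_measurable M"
    unfolding R_def by measurable
  have pow_le: "\<bar>(u x)^k\<bar> \<le> 1" for x k
    using u_le by (simp add: power_abs power_le_one)
  have int_pow: "integrable M (\<lambda>x. (u x)^k)" for k
    by (rule integrable_const_bound[where B=1]) (use pow_le in auto)
  have int_h_pow: "integrable M (\<lambda>x. h x * (u x)^k)" for k
    by (rule Bochner_Integration.integrable_bound[OF integrable_norm[OF int_h]])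
       (use pow_le in \<open>auto simp: abs_mult intro!: mult_left_le\<close>)
  have R_le: "\<bar>R x\<bar> \<le> K" for x
    using Y_approx[of x] pow_le[of x 4] K_nonneg unfolding R_def
    by (smt (verit) mult_left_le power_even_abs_numeral)
  have int_R: "integrable M R"
    by (rule integrable_const_bound[where B=K]) (use R_le in auto)
  have int_hR: "integrable M (\<lambda>x. h x * R x)"
  proof (rule Bochner_Integration.integrable_bound[of _ "\<lambda>x. K * norm (h x)"])
    show "integrable M (\<lambda>x. K * norm (h x))"
      using int_h by simp
    show "AE x in M. norm (h x * R x) \<le> norm (K * norm (h x))"
    proof (intro AE_I2)
      fix x
      have "\<bar>h x\<bar> * \<bar>R x\<bar> \<le> \<bar>h x\<bar> * K"
        using R_le by (intro mult_left_mono) auto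
      then show "norm (h x * R x) \<le> norm (K * norm (h x))"
        using K_nonneg by (simp add: abs_mult ac_simps)
    qed
  qed measurable
  have expand: "Y x * (m + h x) = main x + err1 x + err2 x" for x
    by (simp add: R_def main_def err1_def err2_def algebra_simps)
  have int_main: "integrable M main" and int_err1: "integrable M err1" and int_err2: "integrable M err2"
    using int_pow int_pow[of 1] int_h_pow[of 1] int_h_pow int_R int_hR int_h
    by (simp_all add: main_def err1_def err2_def)
  have E_main: "expectation main = m * c0 + m * c2 * expectation (\<lambda>x. (u x)^2) + c1 * expectation (\<lambda>x. h x * u x)"
    using int_pow[of 1] int_pow int_h_pow[of 1] int_h E_u E_h by (simp add: main_def prob_space)
  have E_err1: "\<bar>expectation err1\<bar>
      \<le> \<bar>m * c3\<bar> * \<bar>expectation (\<lambda>x. (u x)^3)\<bar> + \<bar>c2\<bar> * \<bar>expectation (\<lambda>x. h x * (u x)^2)\<bar>"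
    using int_pow int_h_pow by (simp add: err1_def abs_mult[symmetric] abs_triangle_ineq)
  have err2_le: "\<bar>err2 x\<bar> \<le> bound x" for x
    unfolding err2_def bound_def
    by (rule abs_cubic_remainder_product_le[OF u_le K_nonneg]) (use Y_approx in \<open>simp add: R_def\<close>)
  have int_bound: "integrable M bound"
    using int_pow int_hu_sq by (simp add: bound_def)
  have "\<bar>expectation err2\<bar> \<le> expectation bound"
    by (rule order_trans[OF integral_abs_bound integral_mono]) (use int_err2 int_bound err2_le in auto)
  also have "expectation bound = \<bar>m\<bar> * K * expectation (\<lambda>x. (u x)^4)
      + (\<bar>c3\<bar> + K) / 2 * (expectation (\<lambda>x. (h x * u x)^2) + expectation (\<lambda>x. (u x)^4))"
    using int_pow int_hu_sq by (simp add: bound_def)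
  finally have E_err2: "\<bar>expectation err2\<bar> \<le> \<dots>" .
  have "expectation (\<lambda>x. Y x * (m + h x)) = expectation main + expectation err1 + expectation err2"
    using int_main int_err1 int_err2 by (simp add: expand)
  then show ?thesis
    using E_main E_err1 E_err2 by linarith
qed

lemma (in prob_space) rvar_nonneg: "0 \<le> rvar M f"
  by (simp add: rvar_def)

lemma (in prob_space) rvar_le_expectation:
  fixes f :: "'a \<Rightarrow> real"
  assumes [measurable]: "f \<in> borel_measurable M" and f_01: "AE x in M. 0 \<le> f x \<and> f x \<le> 1"
  shows "rvar M f \<le> expectation f"
proof -
  have int_f: "integrable M f"
    by (rule integrable_const_bound[where B=1]) (use f_01 in auto)
  have int_sq: "integrable M (\<lambda>x. (f x - expectation f)^2)"
    by (rule integrable_const_bound[where B="(1 + \<bar>expectation f\<bar>)^2"])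
       (use f_01 in \<open>auto simp: abs_le_square_iff[symmetric] intro!: order_trans[OF abs_triangle_ineq4]\<close>)
  have "rvar M f \<le> expectation (\<lambda>x. f x - 2 * expectation f * f x + (expectation f)^2)"
    unfolding rvar_def
  proof (rule integral_mono_AE[OF int_sq])
    show "integrable M (\<lambda>x. f x - 2 * expectation f * f x + (expectation f)^2)"
      using int_f by simp
    show "AE x in M. (f x - expectation f)^2 \<le> f x - 2 * expectation f * f x + (expectation f)^2"
      using f_01
    proof eventually_elim
      case (elim x)
      then have "f x * f x \<le> f x"
        by (simp add: mult_left_le)
      then show ?case
        by (simp add: power2_eq_square algebra_simps)
    qed
  qed
  also have "\<dots> = expectation f - (expectation f)^2"
    using int_f by (simp add: prob_space power2_eq_square)
  finally show ?thesis
    using zero_le_power2[of "expectation f"] by linarith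
qed

lemma (in prob_space) norm_rcov_le:
  fixes g :: "'a \<Rightarrow> 'b::{banach, second_countable_topology}" and f :: "'a \<Rightarrow> real"
  assumes int_g: "integrable M g" and [measurable]: "f \<in> borel_measurable M"
    and f_01: "AE x in M. 0 \<le> f x \<and> f x \<le> 1" and g_le: "AE x in M. norm (g x) \<le> C * f x"
  shows "norm (rcov M g f) \<le> C * expectation f"
proof -
  define e where "e = expectation f"
  have int_f: "integrable M f"
    by (rule integrable_const_bound[where B=1]) (use f_01 in auto)
  have e_01: "0 \<le> e" "e \<le> 1"
    using f_01 unfolding e_def
    by (auto intro!: integral_nonneg_AE prob_space.integral_le_const prob_space_axioms int_f
             elim: eventually_mono)
  have [measurable]: "g \<in> borel_measurable M"
    using int_g by (rule borel_measurable_integrable)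
  have dev_le: "AE x in M. \<bar>f x - e\<bar> \<le> 1"
    using f_01 by eventually_elim (use e_01 in auto)
  have int_fg: "integrable M (\<lambda>x. (f x - e) *\<^sub>R g x)"
  proof (rule Bochner_Integration.integrable_bound[OF integrable_norm[OF int_g]])
    show "AE x in M. norm ((f x - e) *\<^sub>R g x) \<le> norm (norm (g x))"
      using dev_le by eventually_elim (simp add: mult_left_le_one_le)
  qed measurable
  have "rcov M g f = expectation (\<lambda>x. (f x - e) *\<^sub>R g x - (f x - e) *\<^sub>R expectation g)"
    by (simp add: rcov_def e_def scaleR_diff_right)
  also have "\<dots> = expectation (\<lambda>x. (f x - e) *\<^sub>R g x)"
    using int_fg int_f by (simp add: e_def prob_space)
  finally have rcov_eq: "rcov M g f = expectation (\<lambda>x. (f x - e) *\<^sub>R g x)" .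
  have "norm (rcov M g f) \<le> expectation (\<lambda>x. norm ((f x - e) *\<^sub>R g x))"
    unfolding rcov_eq by (rule integral_norm_bound)
  also have "\<dots> \<le> expectation (\<lambda>x. C * f x)"
  proof (rule integral_mono_AE)
    show "integrable M (\<lambda>x. norm ((f x - e) *\<^sub>R g x))"
      using int_fg by (rule integrable_norm)
    show "integrable M (\<lambda>x. C * f x)"
      using int_f by simp
    show "AE x in M. norm ((f x - e) *\<^sub>R g x) \<le> C * f x"
      using dev_le g_le
    proof eventually_elim
      case (elim x)
      have "\<bar>f x - e\<bar> * norm (g x) \<le> 1 * norm (g x)"
        using elim(1) by (intro mult_right_mono) auto
      then show ?case
        using elim(2) by simp
    qed
  qed
  finally show ?thesis
    by (simp add: e_def)
qed

lemma norm_lead_term_le: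
  fixes DP Cv :: "'a::real_normed_vector"
  assumes "0 \<le> q" "q \<le> 1" "0 < P" "0 \<le> V" "V \<le> P" "0 < M"
    and DP_le: "norm ((1 / P) *\<^sub>R DP) \<le> C" and Cv_le: "norm Cv \<le> C' * P"
  shows "norm (lead_term q P DP V Cv M) \<le> (C + C') * (q / (real M * P powr q))"
proof -
  have "norm (((q + 1) / 2 * V) *\<^sub>R grad_ell 1 P DP) = (q + 1) / 2 * V * norm ((1 / P) *\<^sub>R DP)"
    using assms by (simp add: grad_ell_def powr_minus_divide)
  also have "\<dots> \<le> 1 * P * C"
    using assms order_trans[OF norm_ge_zero DP_le] by (intro mult_mono) auto
  finally have "norm (((q + 1) / 2 * V) *\<^sub>R grad_ell 1 P DP - Cv) \<le> P * C + C' * P"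
    using Cv_le norm_triangle_ineq4 by (smt (verit))
  then have "q / (real M * P powr (q + 1)) * norm (((q + 1) / 2 * V) *\<^sub>R grad_ell 1 P DP - Cv)
      \<le> q / (real M * P powr (q + 1)) * (P * C + C' * P)"
    using assms by (intro mult_left_mono) auto
  then have "norm (lead_term q P DP V Cv M) \<le> q / (real M * P powr (q + 1)) * (P * C + C' * P)"
    using assms by (simp add: lead_term_def abs_of_nonneg)
  also have "\<dots> = (C + C') * (q / (real M * P powr q))"
    using assms by (simp add: powr_add field_simps)
  finally show ?thesis .
qed

lemma sum_product3:
  fixes a b c :: "'i \<Rightarrow> 'a::comm_semiring_0"
  shows "sum a I * sum b I * sum c I = (\<Sum>i\<in>I. \<Sum>j\<in>I. \<Sum>k\<in>I. a i * b j * c k)"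
  by (subst sum_product) (simp only: sum_distrib_right, simp only: sum_distrib_left)

lemma sum_product4:
  fixes a b c d :: "'i \<Rightarrow> 'a::comm_semiring_0"
  shows "sum a I * sum b I * sum c I * sum d I
    = (\<Sum>i\<in>I. \<Sum>j\<in>I. \<Sum>k\<in>I. \<Sum>l\<in>I. a i * b j * c k * d l)"
  by (subst sum_product3) (simp only: sum_distrib_right, simp only: sum_distrib_left)

lemma abs_sum3_le_diagonal:
  fixes t :: "nat \<Rightarrow> nat \<Rightarrow> nat \<Rightarrow> real"
  assumes "\<And>i j k. \<bar>t i j k\<bar> \<le> K * of_bool (i = j \<and> i = k)"
  shows "\<bar>\<Sum>i<n. \<Sum>j<n. \<Sum>k<n. t i j k\<bar> \<le> K * n"
proof -
  have "\<bar>\<Sum>i<n. \<Sum>j<n. \<Sum>k<n. t i j k\<bar> \<le> (\<Sum>i<n. \<Sum>j<n. \<Sum>k<n. K * of_bool (i = j \<and> i = k))"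
    by (intro order_trans[OF sum_abs] sum_mono order_trans[OF sum_abs] assms)
  also have "\<dots> = K * n"
    by (simp add: of_bool_conj sum_distrib_left[symmetric] if_distrib sum.delta cong: if_cong)
  finally show ?thesis .
qed

lemma abs_sum4_le_pairings:
  fixes t :: "nat \<Rightarrow> nat \<Rightarrow> nat \<Rightarrow> nat \<Rightarrow> real"
  assumes "\<And>i j k l. \<bar>t i j k l\<bar>
    \<le> K * (of_bool (i = j \<and> k = l) + of_bool (i = k \<and> j = l) + of_bool (i = l \<and> j = k))"
  shows "\<bar>\<Sum>i<n. \<Sum>j<n. \<Sum>k<n. \<Sum>l<n. t i j k l\<bar> \<le> 3 * K * (real n)^2"
proof -
  have "\<bar>\<Sum>i<n. \<Sum>j<n. \<Sum>k<n. \<Sum>l<n. t i j k l\<bar>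
      \<le> (\<Sum>i<n. \<Sum>j<n. \<Sum>k<n. \<Sum>l<n.
            K * (of_bool (i = j \<and> k = l) + of_bool (i = k \<and> j = l) + of_bool (i = l \<and> j = k)))"
    by (intro order_trans[OF sum_abs] sum_mono order_trans[OF sum_abs] assms)
  also have "\<dots> = 3 * K * (real n)^2"
    by (simp add: of_bool_conj sum.distrib distrib_left sum_distrib_left[symmetric]
        sum_distrib_right[symmetric] power2_eq_square)
  finally show ?thesis .
qed

lemma norm_in_bigo_of_components:
  fixes f :: "'b \<Rightarrow> 'a::euclidean_space"
  assumes "\<And>b. b \<in> Basis \<Longrightarrow> (\<lambda>x. f x \<bullet> b) \<in> O[F](g)"
  shows "(\<lambda>x. norm (f x)) \<in> O[F](g)"
proof -
  have "(\<lambda>x. \<Sum>b\<in>Basis. \<bar>f x \<bullet> b\<bar>) \<in> O[F](g)"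
    using assms by (intro big_sum_in_bigo) simp
  moreover have "(\<lambda>x. norm (f x)) \<in> O[F](\<lambda>x. \<Sum>b\<in>Basis. \<bar>f x \<bullet> b\<bar>)"
    by (intro landau_o.big_mono always_eventually allI) (simp add: norm_le_l1 sum_nonneg)
  ultimately show ?thesis
    using landau_o.big_trans by blast
qed

lemma tendsto_of_mono_square_subseq:
  fixes s :: "nat \<Rightarrow> real"
  assumes mono_s: "mono s" and s_nonneg: "\<And>n. 0 \<le> s n"
    and lim: "(\<lambda>k. s (k^2) / real (k^2)) \<longlonglongrightarrow> L"
  shows "(\<lambda>n. s n / real n) \<longlonglongrightarrow> L"
proof -
  define T where "T k = s (k^2) / real (k^2)" for k
  define lo where "lo k = T k * (real k / real (Suc k))^2" for k
  define up where "up k = T (Suc k) * (real (Suc k) / real k)^2" for k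
  have floor_sqrt_at_top: "filterlim floor_sqrt at_top sequentially"
    unfolding filterlim_at_top by (auto intro!: eventually_sequentiallyI le_floor_sqrtI)
  have "lo \<longlonglongrightarrow> L * 1^2"
    unfolding lo_def T_def by (intro tendsto_mult tendsto_power lim LIMSEQ_n_over_Suc_n)
  then have lo_lim: "(\<lambda>n. lo (floor_sqrt n)) \<longlonglongrightarrow> L"
    using filterlim_compose[OF _ floor_sqrt_at_top] by simp
  have "up \<longlonglongrightarrow> L * 1^2"
    unfolding up_def T_def by (intro tendsto_mult tendsto_power LIMSEQ_Suc[OF lim] LIMSEQ_Suc_n_over_n)
  then have up_lim: "(\<lambda>n. up (floor_sqrt n)) \<longlonglongrightarrow> L"
    using filterlim_compose[OF _ floor_sqrt_at_top] by simp
  have "lo (floor_sqrt n) \<le> s n / real n \<and> s n / real n \<le> up (floor_sqrt n)" if "1 \<le> n" for n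
  proof -
    define k where "k = floor_sqrt n"
    have k_pos: "1 \<le> k"
      using that by (simp add: k_def Suc_le_eq)
    have k_bounds: "k^2 \<le> n" "n \<le> (Suc k)^2"
      using Suc_floor_sqrt_power2_gt[of n] by (simp_all add: k_def less_imp_le)
    then have real_k_bounds: "real (k^2) \<le> real n" "real n \<le> real ((Suc k)^2)"
      by (simp_all only: of_nat_le_iff)
    have "lo k = s (k^2) / real ((Suc k)^2)"
      unfolding lo_def T_def using k_pos by (simp add: power_divide field_simps)
    also have "\<dots> \<le> s n / real ((Suc k)^2)"
      by (intro divide_right_mono monoD[OF mono_s]) (use k_bounds in simp_all)
    also have "\<dots> \<le> s n / real n"
      by (rule divide_left_mono) (use s_nonneg real_k_bounds that k_pos in auto)
    finally have "lo k \<le> s n / real n" .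
    moreover have "s n / real n \<le> s ((Suc k)^2) / real n"
      by (intro divide_right_mono monoD[OF mono_s]) (use k_bounds in simp_all)
    moreover have "\<dots> \<le> s ((Suc k)^2) / real (k^2)"
      by (rule divide_left_mono) (use s_nonneg real_k_bounds that k_pos in auto)
    moreover have "\<dots> = up k"
      unfolding up_def T_def using k_pos by (simp add: power_divide field_simps)
    ultimately show ?thesis
      by (simp add: k_def)
  qed
  then show ?thesis
    by (intro tendsto_sandwich[OF _ _ lo_lim up_lim]) (auto intro!: eventually_sequentiallyI[of 1])
qed

lemma inner_grad_ell: "grad_ell q P x \<bullet> b = grad_ell q P (x \<bullet> b)"
  by (simp add: grad_ell_def)

lemma inner_lead_term: "lead_term q P x V y n \<bullet> b = lead_term q P (x \<bullet> b) V (y \<bullet> b) n"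
  by (simp add: lead_term_def grad_ell_def inner_diff_left)

lemma grad_ell_add_lead_term_real:
  fixes m P V Cv :: real
  assumes "0 < P"
  shows "grad_ell q P (-m) + lead_term q P (-m) V Cv n
    = m * P powr (-q) + (m * (q * (q + 1) / 2 * P powr (-q-2)) * V + (- q * P powr (-q-1)) * Cv) / real n"
proof (cases "n = 0")
  case True
  then show ?thesis
    by (simp add: lead_term_def grad_ell_def)
next
  case False
  define X where "X = P powr (q + 1)"
  have X_pos: "0 < X"
    using assms by (simp add: X_def)
  have XP: "P powr (q + 1 + 1) = X * P"
    unfolding X_def powr_add using assms by simp
  have exponents: "-q-1 = -(q + 1)" "-q-2 = -(q + 1 + 1)"
    by simp_all
  have "P powr (-q-1) = 1 / X" and "P powr (-q-2) = 1 / (X * P)"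
    unfolding exponents powr_minus_divide XP by (simp_all add: X_def)
  moreover have "grad_ell 1 P (-m) = m / P" and "grad_ell q P (-m) = m * P powr (-q)"
    using assms by (simp_all add: grad_ell_def powr_minus_divide)
  moreover have "q / (real n * X) * ((q + 1) / 2 * V * (m / P) - Cv)
      = (m * (q * (q + 1) / 2 * (1 / (X * P))) * V + (- q * (1 / X)) * Cv) / real n"
    using X_pos assms False by (simp add: field_simps)
  ultimately show ?thesis
    by (simp add: lead_term_def X_def[symmetric])
qed

lemma pmf_expectation_cong:
  fixes f g :: "'z \<Rightarrow> 'b::{banach, second_countable_topology}"
  assumes "\<And>z. z \<in> set_pmf p \<Longrightarrow> f z = g z"
  shows "measure_pmf.expectation p f = measure_pmf.expectation p g"
  by (rule integral_cong_AE) (use assms in \<open>simp_all add: AE_measure_pmf_iff\<close>)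

lemma rvar_rcov_pmf_cong:
  fixes G :: "'z \<Rightarrow> 'b::{banach, second_countable_topology}"
  assumes "\<And>z. z \<in> set_pmf p \<Longrightarrow> W z = W' z"
  shows "rvar (measure_pmf p) W = rvar (measure_pmf p) W'"
    and "rcov (measure_pmf p) G W = rcov (measure_pmf p) G W'"
proof -
  have E_eq: "measure_pmf.expectation p W = measure_pmf.expectation p W'"
    by (rule pmf_expectation_cong) (rule assms)
  show "rvar (measure_pmf p) W = rvar (measure_pmf p) W'"
    unfolding rvar_def E_eq by (rule pmf_expectation_cong) (simp add: assms)
  show "rcov (measure_pmf p) G W = rcov (measure_pmf p) G W'"
    unfolding rcov_def E_eq by (rule pmf_expectation_cong) (simp add: assms)
qed

lemma integrable_of_square_integrable_norm:
  fixes G :: "'z \<Rightarrow> 'b::{banach, second_countable_topology}"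
  assumes "integrable (measure_pmf p) (\<lambda>z. (norm (G z))^2)"
  shows "integrable (measure_pmf p) G"
proof -
  have "integrable (measure_pmf p) (\<lambda>z. norm (G z))"
    by (rule measure_pmf.square_integrable_imp_integrable[OF _ assms]) simp
  then show ?thesis
    by (subst integrable_norm_iff[symmetric]) auto
qed

lemma norm_lead_term_pmf_le:
  fixes p :: "'z pmf" and W :: "'z \<Rightarrow> real" and G :: "'z \<Rightarrow> 'b::{banach, second_countable_topology}"
  defines "P \<equiv> measure_pmf.expectation p W"
  assumes "0 \<le> q" "q \<le> 1" "0 < P" "0 < M" and W_01: "\<And>z. 0 \<le> W z \<and> W z \<le> 1"
    and int_G: "integrable (measure_pmf p) G" and G_le: "\<And>z. z \<in> set_pmf p \<Longrightarrow> norm (G z) \<le> C' * W z"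
    and DP_le: "norm ((1 / P) *\<^sub>R DP) \<le> C"
  shows "norm (lead_term q P DP (rvar (measure_pmf p) W) (rcov (measure_pmf p) G W) M)
    \<le> (C + C') * (q / (real M * P powr q))"
proof (rule norm_lead_term_le)
  have W_01_AE: "AE z in measure_pmf p. 0 \<le> W z \<and> W z \<le> 1"
    using W_01 by simp
  then show "rvar (measure_pmf p) W \<le> P"
    unfolding P_def by (rule measure_pmf.rvar_le_expectation[rotated]) simp
  show "norm (rcov (measure_pmf p) G W) \<le> C' * P"
    unfolding P_def using G_le
    by (intro measure_pmf.norm_rcov_le[OF int_G _ W_01_AE]) (auto simp: AE_measure_pmf_iff)
qed (use assms measure_pmf.rvar_nonneg in auto)

section \<open>I.i.d. sequences and moments of sample means\<close>

lemma square_integrable_pmf_of_bounded: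
  fixes f :: "'z \<Rightarrow> real"
  assumes "\<And>z. \<bar>f z\<bar> \<le> c"
  shows "integrable (measure_pmf p) (\<lambda>z. (f z)^2)"
  by (rule measure_pmf.integrable_const_bound[where B="c^2"])
     (use assms in \<open>auto simp: abs_le_square_iff[symmetric] intro: order.trans[OF _ abs_ge_self]\<close>)

locale iid = prob_space S for S :: "'w measure" +
  fixes Z :: "nat \<Rightarrow> 'w \<Rightarrow> 'z::countable" and \<mu> :: "'z pmf"
  assumes indep_Z: "indep_vars (\<lambda>_. count_space UNIV) Z UNIV"
    and distr_Z: "\<And>m. distr S (count_space UNIV) (Z m) = measure_pmf \<mu>"
begin

lemma measurable_Z [measurable]: "Z m \<in> measurable S (count_space UNIV)"
  using indep_Z unfolding indep_vars_def by auto

lemma borel_measurable_comp_Z [measurable]: "(\<lambda>\<omega>. f (Z m \<omega>)) \<in> borel_measurable S"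
  by (rule measurable_compose[OF measurable_Z]) simp

lemma integrable_comp_Z_iff:
  fixes f :: "'z \<Rightarrow> 'b::{banach, second_countable_topology}"
  shows "integrable S (\<lambda>\<omega>. f (Z m \<omega>)) \<longleftrightarrow> integrable (measure_pmf \<mu>) f"
  using integrable_distr_eq[of "Z m" S "count_space UNIV" f] by (simp add: distr_Z)

lemma integral_comp_Z:
  fixes f :: "'z \<Rightarrow> 'b::{banach, second_countable_topology}"
  shows "expectation (\<lambda>\<omega>. f (Z m \<omega>)) = measure_pmf.expectation \<mu> f"
  using integral_distr[of "Z m" S "count_space UNIV" f] by (simp add: distr_Z)

lemma AE_Z_in_set_pmf: "AE \<omega> in S. \<forall>m. Z m \<omega> \<in> set_pmf \<mu>"
proof -
  have "AE \<omega> in S. Z m \<omega> \<in> set_pmf \<mu>" for m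
    by (rule AE_distrD[OF measurable_Z]) (unfold distr_Z, rule AE_measure_pmf)
  then show ?thesis
    by (simp add: AE_all_countable)
qed

lemma AE_comp_Z_iff: "(AE \<omega> in S. P (Z m \<omega>)) \<longleftrightarrow> (\<forall>z\<in>set_pmf \<mu>. P z)"
proof -
  have "(AE \<omega> in S. P (Z m \<omega>)) \<longleftrightarrow> (AE z in distr S (count_space UNIV) (Z m). P z)"
    by (rule AE_distr_iff[symmetric]) simp_all
  also have "\<dots> \<longleftrightarrow> (\<forall>z\<in>set_pmf \<mu>. P z)"
    unfolding distr_Z by (rule AE_measure_pmf_iff)
  finally show ?thesis .
qed

lemma rvar_comp_Z: "rvar S (\<lambda>\<omega>. f (Z m \<omega>)) = rvar (measure_pmf \<mu>) f"
  unfolding rvar_def integral_comp_Z[of f]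
  using integral_comp_Z[of "\<lambda>z. (f z - measure_pmf.expectation \<mu> f)^2" m] by simp

lemma rcov_comp_Z:
  fixes g :: "'z \<Rightarrow> 'b::{banach, second_countable_topology}"
  shows "rcov S (\<lambda>\<omega>. g (Z m \<omega>)) (\<lambda>\<omega>. f (Z m \<omega>)) = rcov (measure_pmf \<mu>) g f"
  unfolding rcov_def integral_comp_Z[of f] integral_comp_Z[of g]
  using integral_comp_Z[of "\<lambda>z. (f z - measure_pmf.expectation \<mu> f) *\<^sub>R (g z - measure_pmf.expectation \<mu> g)" m]
  by simp

lemma integrable_comp_Z_of_square:
  fixes A :: "'z \<Rightarrow> real"
  assumes "integrable (measure_pmf \<mu>) (\<lambda>z. (A z)^2)"
  shows "integrable S (\<lambda>\<omega>. A (Z i \<omega>))"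
  by (rule square_integrable_imp_integrable) (use assms in \<open>auto simp: integrable_comp_Z_iff[of "\<lambda>z. (A z)^2"]\<close>)

lemma integrable_mult_comp_Z:
  fixes A B :: "'z \<Rightarrow> real"
  assumes "integrable (measure_pmf \<mu>) (\<lambda>z. (A z)^2)" "integrable (measure_pmf \<mu>) (\<lambda>z. (B z)^2)"
  shows "integrable S (\<lambda>\<omega>. A (Z i \<omega>) * B (Z j \<omega>))"
proof (rule Bochner_Integration.integrable_bound[where f="\<lambda>\<omega>. ((A (Z i \<omega>))^2 + (B (Z j \<omega>))^2) / 2"])
  show "integrable S (\<lambda>\<omega>. ((A (Z i \<omega>))^2 + (B (Z j \<omega>))^2) / 2)"
    using assms by (simp add: integrable_comp_Z_iff[of "\<lambda>z. (A z)^2"] integrable_comp_Z_iff[of "\<lambda>z. (B z)^2"])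
  show "AE \<omega> in S. norm (A (Z i \<omega>) * B (Z j \<omega>)) \<le> norm (((A (Z i \<omega>))^2 + (B (Z j \<omega>))^2) / 2)"
  proof (intro AE_I2)
    fix \<omega>
    have "0 \<le> (\<bar>A (Z i \<omega>)\<bar> - \<bar>B (Z j \<omega>)\<bar>)^2"
      by simp
    then show "norm (A (Z i \<omega>) * B (Z j \<omega>)) \<le> norm (((A (Z i \<omega>))^2 + (B (Z j \<omega>))^2) / 2)"
      by (simp add: power2_eq_square abs_mult algebra_simps)
  qed
qed simp

lemma integrable_mult4_comp_Z:
  fixes A B C D :: "'z \<Rightarrow> real"
  assumes "integrable (measure_pmf \<mu>) (\<lambda>z. (A z)^2)" "integrable (measure_pmf \<mu>) (\<lambda>z. (B z)^2)"
    and C_le: "\<And>z. \<bar>C z\<bar> \<le> c" and D_le: "\<And>z. \<bar>D z\<bar> \<le> d"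
  shows "integrable S (\<lambda>\<omega>. A (Z i \<omega>) * B (Z j \<omega>) * C (Z k \<omega>) * D (Z l \<omega>))"
proof (rule Bochner_Integration.integrable_bound[where f="\<lambda>\<omega>. (c * d) * (A (Z i \<omega>) * B (Z j \<omega>))"])
  show "integrable S (\<lambda>\<omega>. (c * d) * (A (Z i \<omega>) * B (Z j \<omega>)))"
    using integrable_mult_comp_Z[OF assms(1,2)] by simp
  have c_nonneg: "0 \<le> c" and d_nonneg: "0 \<le> d"
    using order_trans[OF abs_ge_zero C_le] order_trans[OF abs_ge_zero D_le] by auto
  have cd: "\<bar>C (Z k \<omega>) * D (Z l \<omega>)\<bar> \<le> c * d" for \<omega>
    unfolding abs_mult by (intro mult_mono C_le D_le) (use c_nonneg in auto)
  show "AE \<omega> in S. norm (A (Z i \<omega>) * B (Z j \<omega>) * C (Z k \<omega>) * D (Z l \<omega>))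
      \<le> norm ((c * d) * (A (Z i \<omega>) * B (Z j \<omega>)))"
  proof (intro AE_I2)
    fix \<omega>
    have "\<bar>A (Z i \<omega>) * B (Z j \<omega>)\<bar> * \<bar>C (Z k \<omega>) * D (Z l \<omega>)\<bar> \<le> \<bar>A (Z i \<omega>) * B (Z j \<omega>)\<bar> * (c * d)"
      by (intro mult_left_mono cd) auto
    then show "norm (A (Z i \<omega>) * B (Z j \<omega>) * C (Z k \<omega>) * D (Z l \<omega>))
        \<le> norm ((c * d) * (A (Z i \<omega>) * B (Z j \<omega>)))"
      using c_nonneg d_nonneg by (simp add: abs_mult mult_ac)
  qed
qed simp

lemma expectation_centered_factor:
  fixes A B C D :: "'z \<Rightarrow> real"
  assumes "i \<notin> {j, k, l}" and int_A: "integrable S (\<lambda>\<omega>. A (Z i \<omega>))"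
    and int_BCD: "integrable S (\<lambda>\<omega>. B (Z j \<omega>) * C (Z k \<omega>) * D (Z l \<omega>))"
    and E_A: "measure_pmf.expectation \<mu> A = 0"
  shows "expectation (\<lambda>\<omega>. A (Z i \<omega>) * B (Z j \<omega>) * C (Z k \<omega>) * D (Z l \<omega>)) = 0"
proof -
  let ?J = "{j, k, l}"
  have indep: "indep_var (PiM ?J (\<lambda>_. count_space UNIV)) (\<lambda>\<omega>. restrict (\<lambda>i. Z i \<omega>) ?J)
      (PiM {i} (\<lambda>_. count_space UNIV)) (\<lambda>\<omega>. restrict (\<lambda>i. Z i \<omega>) {i})"
    by (rule indep_var_restrict[OF indep_Z]) (use assms(1) in auto)
  have meas_BCD: "(\<lambda>f. B (f j) * C (f k) * D (f l)) \<in> borel_measurable (PiM ?J (\<lambda>_. count_space UNIV))"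
    by (intro borel_measurable_times measurable_compose[OF measurable_component_singleton]) auto
  have meas_A: "(\<lambda>f. A (f i)) \<in> borel_measurable (PiM {i} (\<lambda>_. count_space UNIV))"
    by (rule measurable_compose[OF measurable_component_singleton]) auto
  have "indep_var borel (\<lambda>\<omega>. B (Z j \<omega>) * C (Z k \<omega>) * D (Z l \<omega>)) borel (\<lambda>\<omega>. A (Z i \<omega>))"
    using indep_var_compose[OF indep meas_BCD meas_A] by (simp add: comp_def)
  then have "expectation (\<lambda>\<omega>. B (Z j \<omega>) * C (Z k \<omega>) * D (Z l \<omega>) * A (Z i \<omega>))
      = expectation (\<lambda>\<omega>. B (Z j \<omega>) * C (Z k \<omega>) * D (Z l \<omega>)) * expectation (\<lambda>\<omega>. A (Z i \<omega>))"
    using int_BCD int_A by (rule indep_var_lebesgue_integral)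
  also have "expectation (\<lambda>\<omega>. A (Z i \<omega>)) = 0"
    using E_A by (simp add: integral_comp_Z)
  finally show ?thesis
    by (simp add: mult_ac)
qed

definition sample_mean :: "('z \<Rightarrow> 'b::real_vector) \<Rightarrow> nat \<Rightarrow> 'w \<Rightarrow> 'b" where
  "sample_mean A n \<omega> = (1 / real n) *\<^sub>R (\<Sum>m<n. A (Z m \<omega>))"

lemma sample_mean_real: "sample_mean (A :: 'z \<Rightarrow> real) n \<omega> = (\<Sum>m<n. A (Z m \<omega>)) / real n"
  by (simp add: sample_mean_def)

lemma borel_measurable_sample_mean [measurable]:
  "sample_mean (A :: 'z \<Rightarrow> 'b::{real_normed_vector, second_countable_topology}) n \<in> borel_measurable S"
  unfolding sample_mean_def[abs_def] by measurable

lemma integrable_sample_mean: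
  fixes A :: "'z \<Rightarrow> 'b::{banach, second_countable_topology}"
  assumes "integrable (measure_pmf \<mu>) A"
  shows "integrable S (sample_mean A n)"
  using assms unfolding sample_mean_def[abs_def] by (simp add: integrable_comp_Z_iff)

lemma expectation_sample_mean:
  fixes A :: "'z \<Rightarrow> 'b::{banach, second_countable_topology}"
  assumes "integrable (measure_pmf \<mu>) A" and "0 < n"
  shows "expectation (sample_mean A n) = measure_pmf.expectation \<mu> A"
  using assms unfolding sample_mean_def[abs_def]
  by (simp add: integrable_comp_Z_iff integral_comp_Z sum_constant_scaleR)

lemma sample_mean_ge:
  fixes W :: "'z \<Rightarrow> real"
  assumes "\<And>z. a \<le> W z" and "0 < n"
  shows "a \<le> sample_mean W n \<omega>"
  using sum_mono[of "{..<n}" "\<lambda>_. a" "\<lambda>m. W (Z m \<omega>)"] assms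
  by (simp add: sample_mean_real field_simps)

lemma sample_mean_le:
  fixes W :: "'z \<Rightarrow> real"
  assumes "\<And>z. W z \<le> b" and "0 < n"
  shows "sample_mean W n \<omega> \<le> b"
  using sum_mono[of "{..<n}" "\<lambda>m. W (Z m \<omega>)" "\<lambda>_. b"] assms
  by (simp add: sample_mean_real field_simps)

lemma integrable_sample_mean_mult:
  fixes A B :: "'z \<Rightarrow> real"
  assumes "integrable (measure_pmf \<mu>) (\<lambda>z. (A z)^2)" "integrable (measure_pmf \<mu>) (\<lambda>z. (B z)^2)"
  shows "integrable S (\<lambda>\<omega>. sample_mean A n \<omega> * sample_mean B n \<omega>)"
  unfolding sample_mean_real times_divide_times_eq sum_product
  by (intro integrable_divide Bochner_Integration.integrable_sum integrable_mult_comp_Z assms)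

lemma integrable_sample_mean_mult4:
  fixes A B C D :: "'z \<Rightarrow> real"
  assumes "integrable (measure_pmf \<mu>) (\<lambda>z. (A z)^2)" "integrable (measure_pmf \<mu>) (\<lambda>z. (B z)^2)"
    and "\<And>z. \<bar>C z\<bar> \<le> c" and "\<And>z. \<bar>D z\<bar> \<le> d"
  shows "integrable S (\<lambda>\<omega>. sample_mean A n \<omega> * sample_mean B n \<omega> * sample_mean C n \<omega> * sample_mean D n \<omega>)"
  unfolding sample_mean_real times_divide_times_eq sum_product sum_distrib_left sum_distrib_right
  by (intro integrable_divide Bochner_Integration.integrable_sum integrable_mult4_comp_Z[OF assms])

lemma expectation_sample_mean_mult:
  fixes A B :: "'z \<Rightarrow> real"
  assumes sq_A: "integrable (measure_pmf \<mu>) (\<lambda>z. (A z)^2)" and sq_B: "integrable (measure_pmf \<mu>) (\<lambda>z. (B z)^2)"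
    and E_A: "measure_pmf.expectation \<mu> A = 0"
  shows "expectation (\<lambda>\<omega>. sample_mean A n \<omega> * sample_mean B n \<omega>)
    = measure_pmf.expectation \<mu> (\<lambda>z. A z * B z) / real n"
proof -
  have summand: "expectation (\<lambda>\<omega>. A (Z i \<omega>) * B (Z j \<omega>))
      = (if i = j then measure_pmf.expectation \<mu> (\<lambda>z. A z * B z) else 0)" for i j
  proof (cases "i = j")
    case True
    then show ?thesis
      using integral_comp_Z[of "\<lambda>z. A z * B z" i] by simp
  next
    case False
    then show ?thesis
      using expectation_centered_factor[of i j j j A B "\<lambda>_. 1" "\<lambda>_. 1"]
        integrable_comp_Z_of_square[OF sq_A] integrable_comp_Z_of_square[OF sq_B] E_A
      by simp
  qed
  have "expectation (\<lambda>\<omega>. sample_mean A n \<omega> * sample_mean B n \<omega>)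
      = (\<Sum>i<n. \<Sum>j<n. expectation (\<lambda>\<omega>. A (Z i \<omega>) * B (Z j \<omega>))) / (real n * real n)"
    unfolding sample_mean_real times_divide_times_eq sum_product
    using integrable_mult_comp_Z[OF sq_A sq_B] by simp
  also have "\<dots> = measure_pmf.expectation \<mu> (\<lambda>z. A z * B z) / real n"
    by (simp add: summand)
  finally show ?thesis .
qed

lemma expectation_mult3_comp_Z_off_diagonal:
  fixes A B C :: "'z \<Rightarrow> real"
  assumes sq_A: "integrable (measure_pmf \<mu>) (\<lambda>z. (A z)^2)"
    and B_le: "\<And>z. \<bar>B z\<bar> \<le> c" and C_le: "\<And>z. \<bar>C z\<bar> \<le> c"
    and E_A: "measure_pmf.expectation \<mu> A = 0" and E_B: "measure_pmf.expectation \<mu> B = 0"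
    and E_C: "measure_pmf.expectation \<mu> C = 0"
    and off_diagonal: "\<not> (i = j \<and> i = k)"
  shows "expectation (\<lambda>\<omega>. A (Z i \<omega>) * B (Z j \<omega>) * C (Z k \<omega>)) = 0"
proof -
  have sq_B: "integrable (measure_pmf \<mu>) (\<lambda>z. (B z)^2)" and sq_C: "integrable (measure_pmf \<mu>) (\<lambda>z. (C z)^2)"
    using square_integrable_pmf_of_bounded B_le C_le by blast+
  note int_1 = integrable_comp_Z_of_square
  consider "i \<notin> {j, k}" | "j \<notin> {i, k}" | "k \<notin> {i, j}"
    using off_diagonal by blast
  then show ?thesis
  proof cases
    case 1
    show ?thesis
      using expectation_centered_factor[of i j k k A B C "\<lambda>_. 1"] 1 int_1[OF sq_A] E_A
        integrable_mult4_comp_Z[of B "\<lambda>_. 1" C c "\<lambda>_. 1" 1 j j k k] sq_B B_le C_le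
      by simp
  next
    case 2
    show ?thesis
      using expectation_centered_factor[of j i k k B A C "\<lambda>_. 1"] 2 int_1[OF sq_B] E_B
        integrable_mult4_comp_Z[of A "\<lambda>_. 1" C c "\<lambda>_. 1" 1 i i k k] sq_A C_le
      by (simp add: mult_ac)
  next
    case 3
    show ?thesis
      using expectation_centered_factor[of k i j j C A B "\<lambda>_. 1"] 3 int_1[OF sq_C] E_C
        integrable_mult4_comp_Z[of A "\<lambda>_. 1" B c "\<lambda>_. 1" 1 i i j j] sq_A B_le
      by (simp add: mult_ac)
  qed
qed

lemma abs_expectation_mult3_comp_Z_le:
  fixes A B C :: "'z \<Rightarrow> real"
  assumes sq_A: "integrable (measure_pmf \<mu>) (\<lambda>z. (A z)^2)"
    and B_le: "\<And>z. \<bar>B z\<bar> \<le> c" and C_le: "\<And>z. \<bar>C z\<bar> \<le> c"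
  shows "\<bar>expectation (\<lambda>\<omega>. A (Z i \<omega>) * B (Z i \<omega>) * C (Z i \<omega>))\<bar>
    \<le> c^2 * measure_pmf.expectation \<mu> (\<lambda>z. \<bar>A z\<bar>)"
proof -
  have "\<bar>expectation (\<lambda>\<omega>. A (Z i \<omega>) * B (Z i \<omega>) * C (Z i \<omega>))\<bar>
      \<le> expectation (\<lambda>\<omega>. \<bar>A (Z i \<omega>) * B (Z i \<omega>) * C (Z i \<omega>)\<bar>)"
    by (rule integral_abs_bound)
  also have "\<dots> \<le> expectation (\<lambda>\<omega>. c^2 * \<bar>A (Z i \<omega>)\<bar>)"
  proof (rule integral_mono)
    show "integrable S (\<lambda>\<omega>. \<bar>A (Z i \<omega>) * B (Z i \<omega>) * C (Z i \<omega>)\<bar>)"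
      using integrable_mult4_comp_Z[of A "\<lambda>_. 1" B c C c i i i i] sq_A B_le C_le by simp
    show "integrable S (\<lambda>\<omega>. c^2 * \<bar>A (Z i \<omega>)\<bar>)"
      using integrable_comp_Z_of_square[OF sq_A] by simp
    fix \<omega>
    have "\<bar>B (Z i \<omega>)\<bar> * \<bar>C (Z i \<omega>)\<bar> \<le> c * c"
      by (intro mult_mono B_le C_le) (use order_trans[OF abs_ge_zero B_le] in auto)
    then have "\<bar>A (Z i \<omega>)\<bar> * (\<bar>B (Z i \<omega>)\<bar> * \<bar>C (Z i \<omega>)\<bar>) \<le> \<bar>A (Z i \<omega>)\<bar> * (c * c)"
      by (intro mult_left_mono) auto
    then show "\<bar>A (Z i \<omega>) * B (Z i \<omega>) * C (Z i \<omega>)\<bar> \<le> c^2 * \<bar>A (Z i \<omega>)\<bar>"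
      by (simp add: abs_mult power2_eq_square mult_ac)
  qed
  also have "\<dots> = c^2 * measure_pmf.expectation \<mu> (\<lambda>z. \<bar>A z\<bar>)"
    using integral_comp_Z[of "\<lambda>z. \<bar>A z\<bar>" i] by simp
  finally show ?thesis .
qed

lemma abs_expectation_sample_mean3_le:
  fixes A B C :: "'z \<Rightarrow> real"
  assumes sq_A: "integrable (measure_pmf \<mu>) (\<lambda>z. (A z)^2)"
    and B_le: "\<And>z. \<bar>B z\<bar> \<le> c" and C_le: "\<And>z. \<bar>C z\<bar> \<le> c"
    and E_A: "measure_pmf.expectation \<mu> A = 0" and E_B: "measure_pmf.expectation \<mu> B = 0"
    and E_C: "measure_pmf.expectation \<mu> C = 0"
  shows "\<bar>expectation (\<lambda>\<omega>. sample_mean A n \<omega> * sample_mean B n \<omega> * sample_mean C n \<omega>)\<bar>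
    \<le> c^2 * measure_pmf.expectation \<mu> (\<lambda>z. \<bar>A z\<bar>) / (real n)^2"
proof -
  have int_ABC: "integrable S (\<lambda>\<omega>. A (Z i \<omega>) * B (Z j \<omega>) * C (Z k \<omega>))" for i j k
    using integrable_mult4_comp_Z[of A "\<lambda>_. 1" B c C c i i j k] sq_A B_le C_le by simp
  have summand: "\<bar>expectation (\<lambda>\<omega>. A (Z i \<omega>) * B (Z j \<omega>) * C (Z k \<omega>))\<bar>
      \<le> c^2 * measure_pmf.expectation \<mu> (\<lambda>z. \<bar>A z\<bar>) * of_bool (i = j \<and> i = k)" for i j k
    using abs_expectation_mult3_comp_Z_le[of A B c C i] sq_A B_le C_le
      expectation_mult3_comp_Z_off_diagonal[of A B c C i j k] E_A E_B E_C
    by (cases "i = j \<and> i = k") auto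
  have "(\<lambda>\<omega>. sample_mean A n \<omega> * sample_mean B n \<omega> * sample_mean C n \<omega>)
      = (\<lambda>\<omega>. (\<Sum>i<n. \<Sum>j<n. \<Sum>k<n. A (Z i \<omega>) * B (Z j \<omega>) * C (Z k \<omega>)) / (real n)^3)"
    unfolding sample_mean_real sum_product3[symmetric] by (simp add: power3_eq_cube)
  then have "expectation (\<lambda>\<omega>. sample_mean A n \<omega> * sample_mean B n \<omega> * sample_mean C n \<omega>)
      = (\<Sum>i<n. \<Sum>j<n. \<Sum>k<n. expectation (\<lambda>\<omega>. A (Z i \<omega>) * B (Z j \<omega>) * C (Z k \<omega>))) / (real n)^3"
    using int_ABC by (simp add: Bochner_Integration.integral_sum)
  also have "\<bar>\<dots>\<bar> \<le> c^2 * measure_pmf.expectation \<mu> (\<lambda>z. \<bar>A z\<bar>) * real n / (real n)^3"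
    unfolding abs_divide power_abs abs_of_nat
    by (intro divide_right_mono abs_sum3_le_diagonal summand zero_le_power of_nat_0_le_iff)
  also have "\<dots> = c^2 * measure_pmf.expectation \<mu> (\<lambda>z. \<bar>A z\<bar>) / (real n)^2"
    by (cases "n = 0") (simp_all add: power2_eq_square power3_eq_cube)
  finally show ?thesis .
qed

lemma abs_expectation_mult4_comp_Z_le:
  fixes A B C D :: "'z \<Rightarrow> real"
  assumes sq_A: "integrable (measure_pmf \<mu>) (\<lambda>z. (A z)^2)" and sq_B: "integrable (measure_pmf \<mu>) (\<lambda>z. (B z)^2)"
    and C_le: "\<And>z. \<bar>C z\<bar> \<le> c" and D_le: "\<And>z. \<bar>D z\<bar> \<le> c"
  shows "\<bar>expectation (\<lambda>\<omega>. A (Z i \<omega>) * B (Z j \<omega>) * C (Z k \<omega>) * D (Z l \<omega>))\<bar>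
    \<le> c^2 * (measure_pmf.expectation \<mu> (\<lambda>z. (A z)^2) + measure_pmf.expectation \<mu> (\<lambda>z. (B z)^2)) / 2"
proof -
  have "\<bar>expectation (\<lambda>\<omega>. A (Z i \<omega>) * B (Z j \<omega>) * C (Z k \<omega>) * D (Z l \<omega>))\<bar>
      \<le> expectation (\<lambda>\<omega>. \<bar>A (Z i \<omega>) * B (Z j \<omega>) * C (Z k \<omega>) * D (Z l \<omega>)\<bar>)"
    by (rule integral_abs_bound)
  also have "\<dots> \<le> expectation (\<lambda>\<omega>. c^2 * (((A (Z i \<omega>))^2 + (B (Z j \<omega>))^2) / 2))"
  proof (rule integral_mono)
    show "integrable S (\<lambda>\<omega>. \<bar>A (Z i \<omega>) * B (Z j \<omega>) * C (Z k \<omega>) * D (Z l \<omega>)\<bar>)"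
      using integrable_mult4_comp_Z[of A B C c D c i j k l] sq_A sq_B C_le D_le by simp
    show "integrable S (\<lambda>\<omega>. c^2 * (((A (Z i \<omega>))^2 + (B (Z j \<omega>))^2) / 2))"
      using sq_A sq_B by (simp add: integrable_comp_Z_iff[of "\<lambda>z. (A z)^2"] integrable_comp_Z_iff[of "\<lambda>z. (B z)^2"])
    fix \<omega>
    have cd: "\<bar>C (Z k \<omega>)\<bar> * \<bar>D (Z l \<omega>)\<bar> \<le> c * c"
      by (intro mult_mono C_le D_le) (use order_trans[OF abs_ge_zero C_le] in auto)
    have "0 \<le> (\<bar>A (Z i \<omega>)\<bar> - \<bar>B (Z j \<omega>)\<bar>)^2"
      by simp
    then have ab: "\<bar>A (Z i \<omega>)\<bar> * \<bar>B (Z j \<omega>)\<bar> \<le> ((A (Z i \<omega>))^2 + (B (Z j \<omega>))^2) / 2"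
      by (simp add: power2_eq_square algebra_simps)
    have "(\<bar>A (Z i \<omega>)\<bar> * \<bar>B (Z j \<omega>)\<bar>) * (\<bar>C (Z k \<omega>)\<bar> * \<bar>D (Z l \<omega>)\<bar>)
        \<le> (((A (Z i \<omega>))^2 + (B (Z j \<omega>))^2) / 2) * (c * c)"
      by (intro mult_mono ab cd) auto
    then show "\<bar>A (Z i \<omega>) * B (Z j \<omega>) * C (Z k \<omega>) * D (Z l \<omega>)\<bar> \<le> c^2 * (((A (Z i \<omega>))^2 + (B (Z j \<omega>))^2) / 2)"
      by (simp add: abs_mult power2_eq_square mult_ac)
  qed
  also have "\<dots> = c^2 * (measure_pmf.expectation \<mu> (\<lambda>z. (A z)^2) + measure_pmf.expectation \<mu> (\<lambda>z. (B z)^2)) / 2"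
    using sq_A sq_B integral_comp_Z[of "\<lambda>z. (A z)^2" i] integral_comp_Z[of "\<lambda>z. (B z)^2" j]
    by (simp add: integrable_comp_Z_iff[of "\<lambda>z. (A z)^2"] integrable_comp_Z_iff[of "\<lambda>z. (B z)^2"])
  finally show ?thesis .
qed

lemma expectation_mult4_comp_Z_unpaired:
  fixes A B C D :: "'z \<Rightarrow> real"
  assumes sq_A: "integrable (measure_pmf \<mu>) (\<lambda>z. (A z)^2)" and sq_B: "integrable (measure_pmf \<mu>) (\<lambda>z. (B z)^2)"
    and C_le: "\<And>z. \<bar>C z\<bar> \<le> c" and D_le: "\<And>z. \<bar>D z\<bar> \<le> c"
    and E_A: "measure_pmf.expectation \<mu> A = 0" and E_B: "measure_pmf.expectation \<mu> B = 0"
    and E_C: "measure_pmf.expectation \<mu> C = 0" and E_D: "measure_pmf.expectation \<mu> D = 0"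
    and unpaired: "\<not> ((i = j \<and> k = l) \<or> (i = k \<and> j = l) \<or> (i = l \<and> j = k))"
  shows "expectation (\<lambda>\<omega>. A (Z i \<omega>) * B (Z j \<omega>) * C (Z k \<omega>) * D (Z l \<omega>)) = 0"
proof -
  have sq_C: "integrable (measure_pmf \<mu>) (\<lambda>z. (C z)^2)" and sq_D: "integrable (measure_pmf \<mu>) (\<lambda>z. (D z)^2)"
    using square_integrable_pmf_of_bounded C_le D_le by blast+
  note int_1 = integrable_comp_Z_of_square
  consider "i \<notin> {j, k, l}" | "j \<notin> {i, k, l}" | "k \<notin> {i, j, l}" | "l \<notin> {i, j, k}"
    using unpaired by blast
  then show ?thesis
  proof cases
    case 1
    show ?thesis
      using expectation_centered_factor[of i j k l A B C D] 1 int_1[OF sq_A] E_A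
        integrable_mult4_comp_Z[of B "\<lambda>_. 1" C c D c j j k l] sq_B C_le D_le
      by simp
  next
    case 2
    show ?thesis
      using expectation_centered_factor[of j i k l B A C D] 2 int_1[OF sq_B] E_B
        integrable_mult4_comp_Z[of A "\<lambda>_. 1" C c D c i i k l] sq_A C_le D_le
      by (simp add: mult_ac)
  next
    case 3
    show ?thesis
      using expectation_centered_factor[of k i j l C A B D] 3 int_1[OF sq_C] E_C
        integrable_mult4_comp_Z[of A B D c "\<lambda>_. 1" 1 i j l l] sq_A sq_B D_le
      by (simp add: mult_ac)
  next
    case 4
    show ?thesis
      using expectation_centered_factor[of l i j k D A B C] 4 int_1[OF sq_D] E_D
        integrable_mult4_comp_Z[of A B C c "\<lambda>_. 1" 1 i j k k] sq_A sq_B C_le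
      by (simp add: mult_ac)
  qed
qed

lemma abs_expectation_sample_mean4_le:
  fixes A B C D :: "'z \<Rightarrow> real"
  assumes sq_A: "integrable (measure_pmf \<mu>) (\<lambda>z. (A z)^2)" and sq_B: "integrable (measure_pmf \<mu>) (\<lambda>z. (B z)^2)"
    and C_le: "\<And>z. \<bar>C z\<bar> \<le> c" and D_le: "\<And>z. \<bar>D z\<bar> \<le> c"
    and E_A: "measure_pmf.expectation \<mu> A = 0" and E_B: "measure_pmf.expectation \<mu> B = 0"
    and E_C: "measure_pmf.expectation \<mu> C = 0" and E_D: "measure_pmf.expectation \<mu> D = 0"
  shows "\<bar>expectation (\<lambda>\<omega>. sample_mean A n \<omega> * sample_mean B n \<omega> * sample_mean C n \<omega> * sample_mean D n \<omega>)\<bar>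
    \<le> 3 * (c^2 * (measure_pmf.expectation \<mu> (\<lambda>z. (A z)^2) + measure_pmf.expectation \<mu> (\<lambda>z. (B z)^2)) / 2)
        / (real n)^2"
proof -
  define K where "K = c^2 * (measure_pmf.expectation \<mu> (\<lambda>z. (A z)^2) + measure_pmf.expectation \<mu> (\<lambda>z. (B z)^2)) / 2"
  note K_bound = abs_expectation_mult4_comp_Z_le[of A B C c D, OF sq_A sq_B C_le D_le, folded K_def]
  have K_nonneg: "0 \<le> K"
    using order_trans[OF abs_ge_zero K_bound] .
  have int_ABCD: "integrable S (\<lambda>\<omega>. A (Z i \<omega>) * B (Z j \<omega>) * C (Z k \<omega>) * D (Z l \<omega>))" for i j k l
    using integrable_mult4_comp_Z[of A B C c D c i j k l] sq_A sq_B C_le D_le by simp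
  have summand: "\<bar>expectation (\<lambda>\<omega>. A (Z i \<omega>) * B (Z j \<omega>) * C (Z k \<omega>) * D (Z l \<omega>))\<bar>
      \<le> K * (of_bool (i = j \<and> k = l) + of_bool (i = k \<and> j = l) + of_bool (i = l \<and> j = k))" for i j k l
  proof (cases "(i = j \<and> k = l) \<or> (i = k \<and> j = l) \<or> (i = l \<and> j = k)")
    case True
    then have "1 \<le> of_bool (i = j \<and> k = l) + of_bool (i = k \<and> j = l) + (of_bool (i = l \<and> j = k) :: real)"
      by auto
    then have "K * 1 \<le> K * (of_bool (i = j \<and> k = l) + of_bool (i = k \<and> j = l) + of_bool (i = l \<and> j = k))"
      using K_nonneg by (rule mult_left_mono)
    then show ?thesis
      using K_bound[of i j k l] by linarith
  next
    case False
    then have "expectation (\<lambda>\<omega>. A (Z i \<omega>) * B (Z j \<omega>) * C (Z k \<omega>) * D (Z l \<omega>)) = 0"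
      by (intro expectation_mult4_comp_Z_unpaired[OF sq_A sq_B C_le D_le E_A E_B E_C E_D])
    then show ?thesis
      using K_nonneg by (simp only: abs_zero) (intro mult_nonneg_nonneg add_nonneg_nonneg zero_less_eq_of_bool)
  qed
  have "(\<lambda>\<omega>. sample_mean A n \<omega> * sample_mean B n \<omega> * sample_mean C n \<omega> * sample_mean D n \<omega>)
      = (\<lambda>\<omega>. (\<Sum>i<n. \<Sum>j<n. \<Sum>k<n. \<Sum>l<n. A (Z i \<omega>) * B (Z j \<omega>) * C (Z k \<omega>) * D (Z l \<omega>)) / (real n)^4)"
    unfolding sample_mean_real sum_product4[symmetric] by (simp add: power4_eq_xxxx)
  then have "expectation (\<lambda>\<omega>. sample_mean A n \<omega> * sample_mean B n \<omega> * sample_mean C n \<omega> * sample_mean D n \<omega>)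
      = (\<Sum>i<n. \<Sum>j<n. \<Sum>k<n. \<Sum>l<n. expectation (\<lambda>\<omega>. A (Z i \<omega>) * B (Z j \<omega>) * C (Z k \<omega>) * D (Z l \<omega>)))
        / (real n)^4"
    using int_ABCD by (simp add: Bochner_Integration.integral_sum)
  also have "\<bar>\<dots>\<bar> \<le> 3 * K * (real n)^2 / (real n)^4"
    unfolding abs_divide power_abs abs_of_nat
    by (intro divide_right_mono abs_sum4_le_pairings summand zero_le_power of_nat_0_le_iff)
  also have "\<dots> = 3 * K / (real n)^2"
    by (cases "n = 0") (simp_all add: power2_eq_square power4_eq_xxxx)
  finally show ?thesis
    by (simp add: K_def)
qed

section \<open>Strong law of large numbers\<close>

lemma sample_mean_square_subseq_tendsto_zero:
  fixes A :: "'z \<Rightarrow> real"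
  assumes sq_A: "integrable (measure_pmf \<mu>) (\<lambda>z. (A z)^2)" and E_A: "measure_pmf.expectation \<mu> A = 0"
  shows "AE \<omega> in S. (\<lambda>k. sample_mean A ((Suc k)^2) \<omega>) \<longlonglongrightarrow> 0"
proof -
  define f where "f k = sample_mean A ((Suc k)^2)" for k
  define \<sigma> where "\<sigma> = measure_pmf.expectation \<mu> (\<lambda>z. A z * A z)"
  have int_A: "integrable (measure_pmf \<mu>) A"
    using sq_A by (rule measure_pmf.square_integrable_imp_integrable[rotated]) simp
  have [measurable]: "f k \<in> borel_measurable S" for k
    by (simp add: f_def)
  have E_f: "expectation (f k) = 0" for k
    using expectation_sample_mean[OF int_A] E_A by (simp add: f_def)
  have int_f_sq: "integrable S (\<lambda>\<omega>. (f k \<omega>)^2)" for k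
    using integrable_sample_mean_mult[OF sq_A sq_A] by (simp add: f_def power2_eq_square)
  have E_f_sq: "expectation (\<lambda>\<omega>. (f k \<omega>)^2) = \<sigma> / real ((Suc k)^2)" for k
    using expectation_sample_mean_mult[OF sq_A sq_A E_A] by (simp add: f_def \<sigma>_def power2_eq_square)
  have "summable (\<lambda>k. 1 / real ((Suc k)^2))"
    using summable_Suc_iff[THEN iffD2, OF inverse_power_summable[of 2, where 'a=real]]
    by (simp add: divide_inverse)
  then have summable_var: "summable (\<lambda>k. \<sigma> / \<delta>^2 * (1 / real ((Suc k)^2)))" for \<delta>
    by (rule summable_mult)
  have "AE \<omega> in S. eventually (\<lambda>k. \<bar>f k \<omega>\<bar> < \<delta>) sequentially" if "0 < \<delta>" for \<delta>
  proof -
    define B where "B k = {\<omega> \<in> space S. \<delta> \<le> \<bar>f k \<omega>\<bar>}" for k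
    have [measurable]: "B k \<in> sets S" for k
      unfolding B_def f_def by measurable
    have "prob (B k) \<le> \<sigma> / \<delta>^2 * (1 / real ((Suc k)^2))" for k
      using Chebyshev_inequality[of "f k" \<delta>] int_f_sq that
      by (simp add: B_def E_f E_f_sq mult_ac)
    then have "summable (\<lambda>k. measure S (B k))"
      by (intro summable_comparison_test'[OF summable_var]) auto
    then have "AE \<omega> in S. eventually (\<lambda>k. \<omega> \<in> space S - B k) sequentially"
      by (intro borel_cantelli_AE1) (auto simp: emeasure_eq_measure)
    then show ?thesis
      by (rule AE_mp) (auto intro!: AE_I2 elim!: eventually_mono simp: B_def not_le)
  qed
  then have "AE \<omega> in S. \<forall>j. eventually (\<lambda>k. \<bar>f k \<omega>\<bar> < 1 / real (Suc j)) sequentially"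
    by (simp add: AE_all_countable)
  then have "AE \<omega> in S. (\<lambda>k. f k \<omega>) \<longlonglongrightarrow> 0"
  proof (rule AE_mp, intro AE_I2 impI)
    fix \<omega>
    assume small: "\<forall>j. eventually (\<lambda>k. \<bar>f k \<omega>\<bar> < 1 / real (Suc j)) sequentially"
    show "(\<lambda>k. f k \<omega>) \<longlonglongrightarrow> 0"
    proof (rule tendstoI)
      fix e :: real
      assume "0 < e"
      then obtain j where j: "1 / real (Suc j) < e"
        using reals_Archimedean by (auto simp: divide_inverse)
      show "eventually (\<lambda>k. dist (f k \<omega>) 0 < e) sequentially"
        using small[rule_format, of j] by (rule eventually_mono) (use j in auto)
    qed
  qed
  then show ?thesis
    by (simp add: f_def)
qed

lemma strong_law_nonneg:
  fixes X :: "'z \<Rightarrow> real"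
  assumes sq_X: "integrable (measure_pmf \<mu>) (\<lambda>z. (X z)^2)" and X_nonneg: "\<And>z. 0 \<le> X z"
  shows "AE \<omega> in S. (\<lambda>n. sample_mean X n \<omega>) \<longlonglongrightarrow> measure_pmf.expectation \<mu> X"
proof -
  define m where "m = measure_pmf.expectation \<mu> X"
  define A where "A z = X z - m" for z
  have int_X: "integrable (measure_pmf \<mu>) X"
    using sq_X by (rule measure_pmf.square_integrable_imp_integrable[rotated]) simp
  have sq_A: "integrable (measure_pmf \<mu>) (\<lambda>z. (A z)^2)"
    using sq_X int_X by (simp add: A_def power2_diff)
  have E_A: "measure_pmf.expectation \<mu> A = 0"
    using int_X by (simp add: A_def[abs_def] m_def)
  have shift: "sample_mean X ((Suc k)^2) \<omega> = sample_mean A ((Suc k)^2) \<omega> + m" for k \<omega>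
    by (simp add: sample_mean_real A_def sum_subtractf field_simps del: of_nat_Suc)
  show ?thesis
    using sample_mean_square_subseq_tendsto_zero[OF sq_A E_A]
  proof (rule AE_mp, intro AE_I2 impI)
    fix \<omega>
    assume "(\<lambda>k. sample_mean A ((Suc k)^2) \<omega>) \<longlonglongrightarrow> 0"
    then have "(\<lambda>k. sample_mean X ((Suc k)^2) \<omega>) \<longlonglongrightarrow> m"
      unfolding shift using tendsto_add[OF _ tendsto_const, of _ 0 sequentially m] by simp
    then have "(\<lambda>k. (\<Sum>i<(Suc k)^2. X (Z i \<omega>)) / real ((Suc k)^2)) \<longlonglongrightarrow> m"
      by (simp add: sample_mean_real)
    then have "(\<lambda>k. (\<Sum>i<k^2. X (Z i \<omega>)) / real (k^2)) \<longlonglongrightarrow> m"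
      by (rule LIMSEQ_imp_Suc)
    then have "(\<lambda>n. (\<Sum>i<n. X (Z i \<omega>)) / real n) \<longlonglongrightarrow> m"
      by (rule tendsto_of_mono_square_subseq[rotated 2])
         (auto intro!: monoI sum_mono2 sum_nonneg X_nonneg)
    then show "(\<lambda>n. sample_mean X n \<omega>) \<longlonglongrightarrow> measure_pmf.expectation \<mu> X"
      by (simp add: sample_mean_real m_def)
  qed
qed

lemma strong_law_real:
  fixes X :: "'z \<Rightarrow> real"
  assumes sq_X: "integrable (measure_pmf \<mu>) (\<lambda>z. (X z)^2)"
  shows "AE \<omega> in S. (\<lambda>n. sample_mean X n \<omega>) \<longlonglongrightarrow> measure_pmf.expectation \<mu> X"
proof -
  define X\<^sub>p where "X\<^sub>p z = max (X z) 0" for z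
  define X\<^sub>n where "X\<^sub>n z = max (- X z) 0" for z
  have sq_part: "integrable (measure_pmf \<mu>) (\<lambda>z. (Y z)^2)" if "\<And>z. \<bar>Y z\<bar> \<le> \<bar>X z\<bar>" for Y :: "'z \<Rightarrow> real"
    by (rule Bochner_Integration.integrable_bound[OF sq_X])
       (use that in \<open>auto intro!: AE_I2 simp: abs_le_square_iff\<close>)
  have sq_p: "integrable (measure_pmf \<mu>) (\<lambda>z. (X\<^sub>p z)^2)" and sq_n: "integrable (measure_pmf \<mu>) (\<lambda>z. (X\<^sub>n z)^2)"
    by (auto intro!: sq_part simp: X\<^sub>p_def X\<^sub>n_def)
  have X_eq: "X = (\<lambda>z. X\<^sub>p z - X\<^sub>n z)"
    by (auto simp: X\<^sub>p_def X\<^sub>n_def max_def)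
  have int_p: "integrable (measure_pmf \<mu>) X\<^sub>p" and int_n: "integrable (measure_pmf \<mu>) X\<^sub>n"
    using sq_p sq_n by (auto intro: measure_pmf.square_integrable_imp_integrable[rotated])
  have "AE \<omega> in S. (\<lambda>n. sample_mean X\<^sub>p n \<omega>) \<longlonglongrightarrow> measure_pmf.expectation \<mu> X\<^sub>p"
    by (rule strong_law_nonneg[OF sq_p]) (simp add: X\<^sub>p_def)
  moreover have "AE \<omega> in S. (\<lambda>n. sample_mean X\<^sub>n n \<omega>) \<longlonglongrightarrow> measure_pmf.expectation \<mu> X\<^sub>n"
    by (rule strong_law_nonneg[OF sq_n]) (simp add: X\<^sub>n_def)
  ultimately show ?thesis
  proof eventually_elim
    case (elim \<omega>)
    have "(\<lambda>n. sample_mean X\<^sub>p n \<omega> - sample_mean X\<^sub>n n \<omega>)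
        \<longlonglongrightarrow> measure_pmf.expectation \<mu> X\<^sub>p - measure_pmf.expectation \<mu> X\<^sub>n"
      by (intro tendsto_diff elim)
    then show ?case
      using int_p int_n by (subst (1 2) X_eq) (simp add: sample_mean_real sum_subtractf diff_divide_distrib)
  qed
qed

lemma strong_law:
  fixes G :: "'z \<Rightarrow> 'a::euclidean_space"
  assumes sq_G: "integrable (measure_pmf \<mu>) (\<lambda>z. (norm (G z))^2)"
  shows "AE \<omega> in S. (\<lambda>n. sample_mean G n \<omega>) \<longlonglongrightarrow> measure_pmf.expectation \<mu> G"
proof -
  have int_G: "integrable (measure_pmf \<mu>) G"
    using sq_G by (rule integrable_of_square_integrable_norm)
  have "AE \<omega> in S. (\<lambda>n. sample_mean G n \<omega> \<bullet> b) \<longlonglongrightarrow> measure_pmf.expectation \<mu> G \<bullet> b"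
    if b: "b \<in> Basis" for b
  proof -
    have "integrable (measure_pmf \<mu>) (\<lambda>z. (G z \<bullet> b)^2)"
      by (rule Bochner_Integration.integrable_bound[OF sq_G])
         (use Basis_le_norm[OF b] in \<open>auto intro!: AE_I2 simp flip: abs_le_square_iff\<close>)
    then have "AE \<omega> in S. (\<lambda>n. sample_mean (\<lambda>z. G z \<bullet> b) n \<omega>)
        \<longlonglongrightarrow> measure_pmf.expectation \<mu> (\<lambda>z. G z \<bullet> b)"
      by (rule strong_law_real)
    moreover have "sample_mean (\<lambda>z. G z \<bullet> b) n \<omega> = sample_mean G n \<omega> \<bullet> b" for n \<omega>
      by (simp add: sample_mean_def inner_sum_left)
    ultimately show ?thesis
      using int_G by simp
  qed
  then have "AE \<omega> in S. \<forall>b\<in>Basis. (\<lambda>n. sample_mean G n \<omega> \<bullet> b) \<longlonglongrightarrow> measure_pmf.expectation \<mu> G \<bullet> b"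
    by (intro AE_finite_allI) auto
  then show ?thesis
    by eventually_elim (erule tendsto_componentwise_iff[THEN iffD2])
qed

section \<open>Consistency and bias of the estimator\<close>

lemma est_eq_sample_means: "est q W G Z n \<omega> = (1 / sample_mean W n \<omega> powr q) *\<^sub>R sample_mean G n \<omega>"
  by (simp add: est_def sample_mean_def Let_def)

lemma borel_measurable_est [measurable]:
  "est q W (G :: 'z \<Rightarrow> 'b::{real_normed_vector, second_countable_topology}) Z n \<in> borel_measurable S"
  unfolding est_def[abs_def] Let_def by measurable

lemma integrable_est:
  fixes G :: "'z \<Rightarrow> 'b::{banach, second_countable_topology}"
  assumes "0 < \<epsilon>" and W_ge: "\<And>z. \<epsilon> \<le> W z" and "0 \<le> q"
    and int_G: "integrable (measure_pmf \<mu>) G" and "0 < n"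
  shows "integrable S (est q W G Z n)"
proof (rule Bochner_Integration.integrable_bound[OF _ borel_measurable_est])
  show "integrable S (\<lambda>\<omega>. (1 / \<epsilon> powr q) *\<^sub>R sample_mean G n \<omega>)"
    using integrable_sample_mean[OF int_G] by simp
  show "AE \<omega> in S. norm (est q W G Z n \<omega>) \<le> norm ((1 / \<epsilon> powr q) *\<^sub>R sample_mean G n \<omega>)"
  proof (intro AE_I2)
    fix \<omega>
    have W_mean_ge: "\<epsilon> \<le> sample_mean W n \<omega>"
      using sample_mean_ge[of \<epsilon> W n \<omega>] W_ge \<open>0 < n\<close> by blast
    then have "1 / sample_mean W n \<omega> powr q \<le> 1 / \<epsilon> powr q"
      using assms by (intro divide_left_mono powr_mono2) auto
    then have "1 / sample_mean W n \<omega> powr q * norm (sample_mean G n \<omega>)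
        \<le> 1 / \<epsilon> powr q * norm (sample_mean G n \<omega>)"
      by (rule mult_right_mono) simp
    then show "norm (est q W G Z n \<omega>) \<le> norm ((1 / \<epsilon> powr q) *\<^sub>R sample_mean G n \<omega>)"
      using W_mean_ge \<open>0 < \<epsilon>\<close> by (simp add: est_eq_sample_means)
  qed
qed

lemma expectation_est_exponent_0:
  fixes G :: "'z \<Rightarrow> 'b::{banach, second_countable_topology}"
  assumes "0 < \<epsilon>" and W_ge: "\<And>z. \<epsilon> \<le> W z" and int_G: "integrable (measure_pmf \<mu>) G" and "0 < n"
  shows "expectation (est 0 W G Z n) = measure_pmf.expectation \<mu> G"
proof -
  have "est 0 W G Z n = sample_mean G n"
  proof
    fix \<omega>
    have "0 < sample_mean W n \<omega>"
      using sample_mean_ge[of \<epsilon> W n \<omega>] W_ge \<open>0 < n\<close> \<open>0 < \<epsilon>\<close> by fastforce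
    then show "est 0 W G Z n \<omega> = sample_mean G n \<omega>"
      by (simp add: est_eq_sample_means)
  qed
  then show ?thesis
    using expectation_sample_mean[OF int_G \<open>0 < n\<close>] by simp
qed

lemma expectation_pmf_bounds:
  fixes W :: "'z \<Rightarrow> real"
  assumes "\<And>z. a \<le> W z \<and> W z \<le> b"
  shows "a \<le> measure_pmf.expectation \<mu> W" "measure_pmf.expectation \<mu> W \<le> b"
proof -
  have "\<bar>W z\<bar> \<le> \<bar>a\<bar> + \<bar>b\<bar>" for z
    using assms[of z] abs_ge_self[of a] abs_ge_minus_self[of a] abs_ge_self[of b] abs_ge_minus_self[of b]
    unfolding abs_le_iff by linarith
  then have "integrable (measure_pmf \<mu>) W"
    by (intro measure_pmf.integrable_const_bound[where B="\<bar>a\<bar> + \<bar>b\<bar>"] AE_I2) auto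
  then show "a \<le> measure_pmf.expectation \<mu> W" "measure_pmf.expectation \<mu> W \<le> b"
    using assms by (auto intro!: measure_pmf.integral_ge_const measure_pmf.integral_le_const)
qed

lemma est_AE_tendsto:
  fixes G :: "'z \<Rightarrow> 'a::euclidean_space"
  assumes "0 < \<epsilon>" and W_bounds: "\<And>z. \<epsilon> \<le> W z \<and> W z \<le> 1"
    and sq_G: "integrable (measure_pmf \<mu>) (\<lambda>z. (norm (G z))^2)"
  shows "AE \<omega> in S. (\<lambda>n. est q W G Z n \<omega>)
    \<longlonglongrightarrow> grad_ell q (measure_pmf.expectation \<mu> W) (- measure_pmf.expectation \<mu> G)"
proof -
  have P_pos: "0 < measure_pmf.expectation \<mu> W"
    using expectation_pmf_bounds(1)[of \<epsilon> W 1] W_bounds \<open>0 < \<epsilon>\<close> by fastforce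
  have sq_W: "integrable (measure_pmf \<mu>) (\<lambda>z. (W z)^2)"
    by (rule square_integrable_pmf_of_bounded[where c=1]) (use W_bounds \<open>0 < \<epsilon>\<close> in \<open>fastforce simp: abs_le_iff\<close>)
  show ?thesis
    using strong_law_real[OF sq_W] strong_law[OF sq_G]
  proof eventually_elim
    case (elim \<omega>)
    have "(\<lambda>n. (1 / sample_mean W n \<omega> powr q) *\<^sub>R sample_mean G n \<omega>)
        \<longlonglongrightarrow> (1 / measure_pmf.expectation \<mu> W powr q) *\<^sub>R measure_pmf.expectation \<mu> G"
      using P_pos by (intro tendsto_scaleR tendsto_divide tendsto_const tendsto_powr elim) auto
    then show ?case
      by (simp add: est_eq_sample_means grad_ell_def powr_minus_divide)
  qed
qed

lemma centered_sample_mean_moments: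
  fixes A B :: "'z \<Rightarrow> real" and n :: nat
  assumes A_le: "\<And>z. \<bar>A z\<bar> \<le> 1" and sq_B: "integrable (measure_pmf \<mu>) (\<lambda>z. (B z)^2)"
    and E_A: "measure_pmf.expectation \<mu> A = 0" and E_B: "measure_pmf.expectation \<mu> B = 0"
  defines "u \<equiv> sample_mean A n" and "h \<equiv> sample_mean B n"
  shows "expectation (\<lambda>\<omega>. (u \<omega>)^2) = measure_pmf.expectation \<mu> (\<lambda>z. A z * A z) / real n"
    and "expectation (\<lambda>\<omega>. h \<omega> * u \<omega>) = measure_pmf.expectation \<mu> (\<lambda>z. B z * A z) / real n"
    and "\<bar>expectation (\<lambda>\<omega>. (u \<omega>)^3)\<bar> \<le> measure_pmf.expectation \<mu> (\<lambda>z. \<bar>A z\<bar>) / (real n)^2"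
    and "\<bar>expectation (\<lambda>\<omega>. h \<omega> * (u \<omega>)^2)\<bar> \<le> measure_pmf.expectation \<mu> (\<lambda>z. \<bar>B z\<bar>) / (real n)^2"
    and "expectation (\<lambda>\<omega>. (u \<omega>)^4) \<le> 3 * measure_pmf.expectation \<mu> (\<lambda>z. (A z)^2) / (real n)^2"
    and "expectation (\<lambda>\<omega>. (h \<omega> * u \<omega>)^2) \<le> 3 * measure_pmf.expectation \<mu> (\<lambda>z. (B z)^2) / (real n)^2"
proof -
  have sq_A: "integrable (measure_pmf \<mu>) (\<lambda>z. (A z)^2)"
    by (rule square_integrable_pmf_of_bounded[of A 1]) (rule A_le)
  show "expectation (\<lambda>\<omega>. (u \<omega>)^2) = measure_pmf.expectation \<mu> (\<lambda>z. A z * A z) / real n"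
    using expectation_sample_mean_mult[of A A n] sq_A E_A by (simp add: u_def power2_eq_square)
  show "expectation (\<lambda>\<omega>. h \<omega> * u \<omega>) = measure_pmf.expectation \<mu> (\<lambda>z. B z * A z) / real n"
    using expectation_sample_mean_mult[of B A n] sq_A sq_B E_B by (simp add: u_def h_def)
  show "\<bar>expectation (\<lambda>\<omega>. (u \<omega>)^3)\<bar> \<le> measure_pmf.expectation \<mu> (\<lambda>z. \<bar>A z\<bar>) / (real n)^2"
    using abs_expectation_sample_mean3_le[of A A 1 A n] sq_A A_le E_A
    by (simp add: u_def power3_eq_cube)
  show "\<bar>expectation (\<lambda>\<omega>. h \<omega> * (u \<omega>)^2)\<bar> \<le> measure_pmf.expectation \<mu> (\<lambda>z. \<bar>B z\<bar>) / (real n)^2"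
    using abs_expectation_sample_mean3_le[of B A 1 A n] sq_B A_le E_A E_B
    by (simp add: u_def h_def power2_eq_square mult.assoc)
  show "expectation (\<lambda>\<omega>. (u \<omega>)^4) \<le> 3 * measure_pmf.expectation \<mu> (\<lambda>z. (A z)^2) / (real n)^2"
    using abs_expectation_sample_mean4_le[of A A A 1 A n] sq_A A_le E_A
    by (simp add: u_def power4_eq_xxxx mult.assoc)
  show "expectation (\<lambda>\<omega>. (h \<omega> * u \<omega>)^2) \<le> 3 * measure_pmf.expectation \<mu> (\<lambda>z. (B z)^2) / (real n)^2"
    using abs_expectation_sample_mean4_le[of B B A 1 A n] sq_A sq_B A_le E_A E_B
    by (simp add: u_def h_def power2_eq_square mult_ac)
qed

lemma abs_expectation_cubic_sample_means_le:
  fixes A B :: "'z \<Rightarrow> real" and Y :: "'w \<Rightarrow> real" and n :: nat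
  defines "u \<equiv> sample_mean A n" and "h \<equiv> sample_mean B n"
  assumes A_le: "\<And>z. \<bar>A z\<bar> \<le> 1" and sq_B: "integrable (measure_pmf \<mu>) (\<lambda>z. (B z)^2)"
    and E_A: "measure_pmf.expectation \<mu> A = 0" and E_B: "measure_pmf.expectation \<mu> B = 0"
    and "0 < n" and "0 \<le> K" and [measurable]: "Y \<in> borel_measurable S"
    and Y_approx: "\<And>\<omega>. \<bar>Y \<omega> - (c0 + c1 * u \<omega> + c2 * (u \<omega>)^2 + c3 * (u \<omega>)^3)\<bar> \<le> K * (u \<omega>)^4"
  shows "\<bar>expectation (\<lambda>\<omega>. Y \<omega> * (m + h \<omega>))
      - (m * c0 + (m * c2 * measure_pmf.expectation \<mu> (\<lambda>z. A z * A z)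
          + c1 * measure_pmf.expectation \<mu> (\<lambda>z. B z * A z)) / real n)\<bar>
    \<le> (\<bar>m * c3\<bar> * measure_pmf.expectation \<mu> (\<lambda>z. \<bar>A z\<bar>) + \<bar>c2\<bar> * measure_pmf.expectation \<mu> (\<lambda>z. \<bar>B z\<bar>)
        + 3 * (\<bar>m\<bar> * K + (\<bar>c3\<bar> + K) / 2) * measure_pmf.expectation \<mu> (\<lambda>z. (A z)^2)
        + 3 * ((\<bar>c3\<bar> + K) / 2) * measure_pmf.expectation \<mu> (\<lambda>z. (B z)^2)) / (real n)^2"
proof -
  note moments = centered_sample_mean_moments[of A B n, OF A_le sq_B E_A E_B, folded u_def h_def]
  have int_A: "integrable (measure_pmf \<mu>) A" and int_B: "integrable (measure_pmf \<mu>) B"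
    using square_integrable_pmf_of_bounded[of A 1] A_le sq_B
    by (auto intro: measure_pmf.square_integrable_imp_integrable[rotated])
  have [measurable]: "u \<in> borel_measurable S" "h \<in> borel_measurable S"
    by (simp_all add: u_def h_def)
  have u_le: "\<bar>u \<omega>\<bar> \<le> 1" for \<omega>
    using sample_mean_ge[of "-1" A n \<omega>] sample_mean_le[of A 1 n \<omega>] A_le \<open>0 < n\<close>
    by (auto simp: u_def abs_le_iff)
  have int_hu_sq: "integrable S (\<lambda>\<omega>. (h \<omega> * u \<omega>)^2)"
    using integrable_sample_mean_mult4[of B B A 1 A 1 n] sq_B A_le
    by (simp add: h_def u_def power2_eq_square mult_ac)
  have "\<bar>expectation (\<lambda>\<omega>. Y \<omega> * (m + h \<omega>))
        - (m * c0 + m * c2 * expectation (\<lambda>\<omega>. (u \<omega>)^2) + c1 * expectation (\<lambda>\<omega>. h \<omega> * u \<omega>))\<bar>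
      \<le> \<bar>m * c3\<bar> * \<bar>expectation (\<lambda>\<omega>. (u \<omega>)^3)\<bar> + \<bar>c2\<bar> * \<bar>expectation (\<lambda>\<omega>. h \<omega> * (u \<omega>)^2)\<bar>
        + \<bar>m\<bar> * K * expectation (\<lambda>\<omega>. (u \<omega>)^4)
        + (\<bar>c3\<bar> + K) / 2 * (expectation (\<lambda>\<omega>. (h \<omega> * u \<omega>)^2) + expectation (\<lambda>\<omega>. (u \<omega>)^4))"
    by (rule expectation_cubic_expansion_product[where u=u and h=h and Y=Y])
       (use u_le \<open>0 \<le> K\<close> Y_approx int_hu_sq int_A int_B E_A E_B \<open>0 < n\<close>
         in \<open>simp_all add: u_def h_def integrable_sample_mean expectation_sample_mean\<close>)
  also have "\<dots> \<le> \<bar>m * c3\<bar> * (measure_pmf.expectation \<mu> (\<lambda>z. \<bar>A z\<bar>) / (real n)^2)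
      + \<bar>c2\<bar> * (measure_pmf.expectation \<mu> (\<lambda>z. \<bar>B z\<bar>) / (real n)^2)
      + \<bar>m\<bar> * K * (3 * measure_pmf.expectation \<mu> (\<lambda>z. (A z)^2) / (real n)^2)
      + (\<bar>c3\<bar> + K) / 2 * (3 * measure_pmf.expectation \<mu> (\<lambda>z. (B z)^2) / (real n)^2
          + 3 * measure_pmf.expectation \<mu> (\<lambda>z. (A z)^2) / (real n)^2)"
    using moments(3-6) \<open>0 \<le> K\<close> by (intro add_mono mult_left_mono) auto
  also have "\<dots> = (\<bar>m * c3\<bar> * measure_pmf.expectation \<mu> (\<lambda>z. \<bar>A z\<bar>) + \<bar>c2\<bar> * measure_pmf.expectation \<mu> (\<lambda>z. \<bar>B z\<bar>)
        + 3 * (\<bar>m\<bar> * K + (\<bar>c3\<bar> + K) / 2) * measure_pmf.expectation \<mu> (\<lambda>z. (A z)^2)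
        + 3 * ((\<bar>c3\<bar> + K) / 2) * measure_pmf.expectation \<mu> (\<lambda>z. (B z)^2)) / (real n)^2"
    using \<open>0 < n\<close> by (simp add: field_simps)
  finally show ?thesis
    by (simp add: moments(1,2) add_divide_distrib add.assoc)
qed

lemma bias_bound_real:
  fixes W G :: "'z \<Rightarrow> real"
  defines "P \<equiv> measure_pmf.expectation \<mu> W" and "m \<equiv> measure_pmf.expectation \<mu> G"
  assumes "0 < \<epsilon>" and W_bounds: "\<And>z. \<epsilon> \<le> W z \<and> W z \<le> 1"
    and sq_G: "integrable (measure_pmf \<mu>) (\<lambda>z. (G z)^2)"
    and "0 \<le> K"
    and taylor: "\<And>x. \<epsilon> \<le> x \<Longrightarrow>
      \<bar>1 / x powr q - (c0 + c1 * (x - P) + c2 * (x - P)^2 + c3 * (x - P)^3)\<bar> \<le> K * (x - P)^4"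
  shows "(\<lambda>n. expectation (\<lambda>\<omega>. sample_mean G n \<omega> / sample_mean W n \<omega> powr q)
      - (m * c0 + (m * c2 * rvar (measure_pmf \<mu>) W + c1 * rcov (measure_pmf \<mu>) G W) / real n))
    \<in> O(\<lambda>n. 1 / (real n)^2)"
proof -
  define W' where "W' z = W z - P" for z
  define G' where "G' z = G z - m" for z
  have P_bounds: "\<epsilon> \<le> P" "P \<le> 1"
    using expectation_pmf_bounds[of \<epsilon> W 1] W_bounds by (auto simp: P_def)
  have W'_le: "\<bar>W' z\<bar> \<le> 1" for z
    using W_bounds[of z] P_bounds \<open>0 < \<epsilon>\<close> by (auto simp: W'_def abs_le_iff)
  have "\<bar>W z\<bar> \<le> 1" for z
    using W_bounds[of z] \<open>0 < \<epsilon>\<close> by auto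
  then have "integrable (measure_pmf \<mu>) (\<lambda>z. (W z)^2)"
    by (rule square_integrable_pmf_of_bounded)
  then have int_W: "integrable (measure_pmf \<mu>) W"
    by (rule measure_pmf.square_integrable_imp_integrable[rotated]) simp
  have int_G: "integrable (measure_pmf \<mu>) G"
    using sq_G by (rule measure_pmf.square_integrable_imp_integrable[rotated]) simp
  have sq_G': "integrable (measure_pmf \<mu>) (\<lambda>z. (G' z)^2)"
    using sq_G int_G by (simp add: G'_def power2_diff)
  have E_W': "measure_pmf.expectation \<mu> W' = 0" and E_G': "measure_pmf.expectation \<mu> G' = 0"
    using int_W int_G by (simp_all add: W'_def[abs_def] G'_def[abs_def] P_def m_def)
  have var: "measure_pmf.expectation \<mu> (\<lambda>z. W' z * W' z) = rvar (measure_pmf \<mu>) W"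
    by (simp add: rvar_def W'_def P_def power2_eq_square)
  have cov: "measure_pmf.expectation \<mu> (\<lambda>z. G' z * W' z) = rcov (measure_pmf \<mu>) G W"
    by (simp add: rcov_def W'_def G'_def P_def m_def mult.commute)
  have sample_means: "sample_mean W n \<omega> = P + sample_mean W' n \<omega>"
    "sample_mean G n \<omega> = m + sample_mean G' n \<omega>" if "0 < n" for n \<omega>
    using that by (simp_all add: sample_mean_real W'_def G'_def sum_subtractf field_simps)
  have "\<forall>\<^sub>F n in sequentially. norm (expectation (\<lambda>\<omega>. sample_mean G n \<omega> / sample_mean W n \<omega> powr q)
      - (m * c0 + (m * c2 * rvar (measure_pmf \<mu>) W + c1 * rcov (measure_pmf \<mu>) G W) / real n))
    \<le> (\<bar>m * c3\<bar> * measure_pmf.expectation \<mu> (\<lambda>z. \<bar>W' z\<bar>) + \<bar>c2\<bar> * measure_pmf.expectation \<mu> (\<lambda>z. \<bar>G' z\<bar>)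
        + 3 * (\<bar>m\<bar> * K + (\<bar>c3\<bar> + K) / 2) * measure_pmf.expectation \<mu> (\<lambda>z. (W' z)^2)
        + 3 * ((\<bar>c3\<bar> + K) / 2) * measure_pmf.expectation \<mu> (\<lambda>z. (G' z)^2)) * norm (1 / (real n)^2)"
  proof (intro eventually_mono[OF eventually_gt_at_top[of 0]])
    fix n :: nat
    assume "0 < n"
    have "\<bar>1 / sample_mean W n \<omega> powr q - (c0 + c1 * sample_mean W' n \<omega> + c2 * (sample_mean W' n \<omega>)^2
        + c3 * (sample_mean W' n \<omega>)^3)\<bar> \<le> K * (sample_mean W' n \<omega>)^4" for \<omega>
      using taylor[of "sample_mean W n \<omega>"] sample_mean_ge[of \<epsilon> W n \<omega>] W_bounds \<open>0 < n\<close>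
      by (simp add: sample_means)
    moreover have "(\<lambda>\<omega>. 1 / sample_mean W n \<omega> powr q) \<in> borel_measurable S"
      by measurable
    ultimately have "\<bar>expectation (\<lambda>\<omega>. 1 / sample_mean W n \<omega> powr q * (m + sample_mean G' n \<omega>))
      - (m * c0 + (m * c2 * measure_pmf.expectation \<mu> (\<lambda>z. W' z * W' z)
          + c1 * measure_pmf.expectation \<mu> (\<lambda>z. G' z * W' z)) / real n)\<bar>
      \<le> (\<bar>m * c3\<bar> * measure_pmf.expectation \<mu> (\<lambda>z. \<bar>W' z\<bar>) + \<bar>c2\<bar> * measure_pmf.expectation \<mu> (\<lambda>z. \<bar>G' z\<bar>)
        + 3 * (\<bar>m\<bar> * K + (\<bar>c3\<bar> + K) / 2) * measure_pmf.expectation \<mu> (\<lambda>z. (W' z)^2)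
        + 3 * ((\<bar>c3\<bar> + K) / 2) * measure_pmf.expectation \<mu> (\<lambda>z. (G' z)^2)) / (real n)^2"
      using abs_expectation_cubic_sample_means_le[OF W'_le sq_G' E_W' E_G' \<open>0 < n\<close> \<open>0 \<le> K\<close>]
      by blast
    then
    show "norm (expectation (\<lambda>\<omega>. sample_mean G n \<omega> / sample_mean W n \<omega> powr q)
      - (m * c0 + (m * c2 * rvar (measure_pmf \<mu>) W + c1 * rcov (measure_pmf \<mu>) G W) / real n))
      \<le> (\<bar>m * c3\<bar> * measure_pmf.expectation \<mu> (\<lambda>z. \<bar>W' z\<bar>) + \<bar>c2\<bar> * measure_pmf.expectation \<mu> (\<lambda>z. \<bar>G' z\<bar>)
        + 3 * (\<bar>m\<bar> * K + (\<bar>c3\<bar> + K) / 2) * measure_pmf.expectation \<mu> (\<lambda>z. (W' z)^2)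
        + 3 * ((\<bar>c3\<bar> + K) / 2) * measure_pmf.expectation \<mu> (\<lambda>z. (G' z)^2)) * norm (1 / (real n)^2)"
      using \<open>0 < n\<close> by (simp add: sample_means var cov)
  qed
  then show ?thesis
    by (rule bigoI)
qed

lemma bias_expansion_real:
  fixes W G :: "'z \<Rightarrow> real"
  defines "P \<equiv> measure_pmf.expectation \<mu> W" and "m \<equiv> measure_pmf.expectation \<mu> G"
  assumes "0 < \<epsilon>" and W_bounds: "\<And>z. \<epsilon> \<le> W z \<and> W z \<le> 1" and "0 \<le> q"
    and sq_G: "integrable (measure_pmf \<mu>) (\<lambda>z. (G z)^2)"
  shows "(\<lambda>n. expectation (\<lambda>\<omega>. sample_mean G n \<omega> / sample_mean W n \<omega> powr q)
      - grad_ell q P (-m) - lead_term q P (-m) (rvar (measure_pmf \<mu>) W) (rcov (measure_pmf \<mu>) G W) n)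
    \<in> O(\<lambda>n. 1 / (real n)^2)"
proof -
  have "\<epsilon> \<le> P"
    using expectation_pmf_bounds(1)[of \<epsilon> W 1] W_bounds by (auto simp: P_def)
  then obtain c3 K where "0 \<le> K" and taylor: "\<And>x. \<epsilon> \<le> x \<Longrightarrow>
    \<bar>1 / x powr q - (P powr (-q) - q * P powr (-q-1) * (x - P)
        + q * (q + 1) / 2 * P powr (-q-2) * (x - P)^2 + c3 * (x - P)^3)\<bar> \<le> K * (x - P)^4"
    using inverse_powr_taylor3[OF \<open>0 < \<epsilon>\<close> _ \<open>0 \<le> q\<close>] by blast
  have "(\<lambda>n. expectation (\<lambda>\<omega>. sample_mean G n \<omega> / sample_mean W n \<omega> powr q)
      - (m * P powr (-q) + (m * (q * (q + 1) / 2 * P powr (-q-2)) * rvar (measure_pmf \<mu>) W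
          + (- q * P powr (-q-1)) * rcov (measure_pmf \<mu>) G W) / real n))
    \<in> O(\<lambda>n. 1 / (real n)^2)"
    unfolding P_def m_def
  proof (rule bias_bound_real)
    show "\<epsilon> \<le> W z \<and> W z \<le> 1" for z
      by (rule W_bounds)
    show "\<bar>1 / x powr q - (measure_pmf.expectation \<mu> W powr (-q)
          + (- q * measure_pmf.expectation \<mu> W powr (-q-1)) * (x - measure_pmf.expectation \<mu> W)
          + q * (q + 1) / 2 * measure_pmf.expectation \<mu> W powr (-q-2) * (x - measure_pmf.expectation \<mu> W)^2
          + c3 * (x - measure_pmf.expectation \<mu> W)^3)\<bar>
        \<le> K * (x - measure_pmf.expectation \<mu> W)^4" if "\<epsilon> \<le> x" for x
      using taylor[OF that] by (simp add: P_def)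
  qed (use \<open>0 < \<epsilon>\<close> sq_G \<open>0 \<le> K\<close> in auto)
  then show ?thesis
    unfolding diff_diff_eq grad_ell_add_lead_term_real[OF order.strict_trans2[OF \<open>0 < \<epsilon>\<close> \<open>\<epsilon> \<le> P\<close>]] .
qed

lemma bias_expansion:
  fixes W :: "'z \<Rightarrow> real" and G :: "'z \<Rightarrow> 'a::euclidean_space"
  defines "P \<equiv> measure_pmf.expectation \<mu> W" and "m \<equiv> measure_pmf.expectation \<mu> G"
  assumes "0 < \<epsilon>" and W_bounds: "\<And>z. \<epsilon> \<le> W z \<and> W z \<le> 1" and "0 \<le> q"
    and sq_G: "integrable (measure_pmf \<mu>) (\<lambda>z. (norm (G z))^2)"
  shows "(\<lambda>n. norm (expectation (est q W G Z n) - grad_ell q P (-m)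
      - lead_term q P (-m) (rvar (measure_pmf \<mu>) W) (rcov (measure_pmf \<mu>) G W) n))
    \<in> O(\<lambda>n. 1 / (real n)^2)"
proof (rule norm_in_bigo_of_components)
  fix b :: 'a
  assume b: "b \<in> Basis"
  define G\<^sub>b where "G\<^sub>b z = G z \<bullet> b" for z
  have int_G: "integrable (measure_pmf \<mu>) G"
    using sq_G by (rule integrable_of_square_integrable_norm)
  have sq_G\<^sub>b: "integrable (measure_pmf \<mu>) (\<lambda>z. (G\<^sub>b z)^2)"
    by (rule Bochner_Integration.integrable_bound[OF sq_G])
       (use Basis_le_norm[OF b] in \<open>auto intro!: AE_I2 simp: G\<^sub>b_def simp flip: abs_le_square_iff\<close>)
  have P_bounds: "\<epsilon> \<le> P" "P \<le> 1"
    using expectation_pmf_bounds[of \<epsilon> W 1] W_bounds by (auto simp: P_def)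
  have W_le: "\<bar>W z - P\<bar> \<le> 1" for z
    using W_bounds[of z] P_bounds \<open>0 < \<epsilon>\<close> by (auto simp: abs_le_iff)
  define C where "C z = (W z - P) *\<^sub>R (G z - m)" for z
  have "integrable (measure_pmf \<mu>) (\<lambda>z. G z - m)"
    using int_G by simp
  then have "integrable (measure_pmf \<mu>) C"
    unfolding C_def[abs_def] by (rule Bochner_Integration.integrable_bound[OF integrable_norm])
       (use W_le in \<open>auto intro!: AE_I2 mult_left_le_one_le\<close>)
  moreover have "rcov (measure_pmf \<mu>) G W = measure_pmf.expectation \<mu> C"
    by (simp add: rcov_def C_def[abs_def] P_def m_def)
  ultimately have "rcov (measure_pmf \<mu>) G W \<bullet> b = measure_pmf.expectation \<mu> (\<lambda>z. C z \<bullet> b)"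
    by simp
  moreover have m_b: "m \<bullet> b = measure_pmf.expectation \<mu> G\<^sub>b"
    using int_G by (simp add: m_def G\<^sub>b_def[abs_def])
  ultimately have rcov_b: "rcov (measure_pmf \<mu>) G W \<bullet> b = rcov (measure_pmf \<mu>) G\<^sub>b W"
    by (simp add: rcov_def C_def P_def G\<^sub>b_def inner_diff_left)
  have "(expectation (est q W G Z n) - grad_ell q P (-m)
        - lead_term q P (-m) (rvar (measure_pmf \<mu>) W) (rcov (measure_pmf \<mu>) G W) n) \<bullet> b
      = expectation (\<lambda>\<omega>. sample_mean G\<^sub>b n \<omega> / sample_mean W n \<omega> powr q)
        - grad_ell q P (- measure_pmf.expectation \<mu> G\<^sub>b)
        - lead_term q P (- measure_pmf.expectation \<mu> G\<^sub>b) (rvar (measure_pmf \<mu>) W) (rcov (measure_pmf \<mu>) G\<^sub>b W) n"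
    if "0 < n" for n
  proof -
    have "expectation (est q W G Z n) \<bullet> b = expectation (\<lambda>\<omega>. est q W G Z n \<omega> \<bullet> b)"
      using integrable_est[of \<epsilon> W q G n] W_bounds \<open>0 < \<epsilon>\<close> \<open>0 \<le> q\<close> int_G that by simp
    also have "\<dots> = expectation (\<lambda>\<omega>. sample_mean G\<^sub>b n \<omega> / sample_mean W n \<omega> powr q)"
      by (simp add: est_eq_sample_means sample_mean_def G\<^sub>b_def inner_sum_left mult.commute)
    finally show ?thesis
      by (simp add: inner_diff_left inner_grad_ell inner_lead_term rcov_b m_b)
  qed
  then have eq_ev: "\<forall>\<^sub>F n in sequentially. (expectation (est q W G Z n) - grad_ell q P (-m)
        - lead_term q P (-m) (rvar (measure_pmf \<mu>) W) (rcov (measure_pmf \<mu>) G W) n) \<bullet> b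
      = expectation (\<lambda>\<omega>. sample_mean G\<^sub>b n \<omega> / sample_mean W n \<omega> powr q)
        - grad_ell q P (- measure_pmf.expectation \<mu> G\<^sub>b)
        - lead_term q P (- measure_pmf.expectation \<mu> G\<^sub>b) (rvar (measure_pmf \<mu>) W) (rcov (measure_pmf \<mu>) G\<^sub>b W) n"
    by (intro eventually_mono[OF eventually_gt_at_top[of 0]])
  moreover have real: "(\<lambda>n. expectation (\<lambda>\<omega>. sample_mean G\<^sub>b n \<omega> / sample_mean W n \<omega> powr q)
        - grad_ell q P (- measure_pmf.expectation \<mu> G\<^sub>b)
        - lead_term q P (- measure_pmf.expectation \<mu> G\<^sub>b) (rvar (measure_pmf \<mu>) W) (rcov (measure_pmf \<mu>) G\<^sub>b W) n)
      \<in> O(\<lambda>n. 1 / (real n)^2)"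
    unfolding P_def by (rule bias_expansion_real[OF \<open>0 < \<epsilon>\<close> W_bounds \<open>0 \<le> q\<close> sq_G\<^sub>b])
  show "(\<lambda>n. (expectation (est q W G Z n) - grad_ell q P (-m)
        - lead_term q P (-m) (rvar (measure_pmf \<mu>) W) (rcov (measure_pmf \<mu>) G W) n) \<bullet> b)
      \<in> O(\<lambda>n. 1 / (real n)^2)"
    by (rule iffD2[OF landau_o.big.in_cong[OF eq_ev] real])
qed

theorem est_asymptotics:
  fixes W :: "'z \<Rightarrow> real" and G :: "'z \<Rightarrow> 'a::euclidean_space"
  defines "P \<equiv> measure_pmf.expectation \<mu> W" and "m \<equiv> measure_pmf.expectation \<mu> G"
  assumes "0 < \<epsilon>" and "0 \<le> q" and W_bounds: "\<And>z. z \<in> set_pmf \<mu> \<Longrightarrow> \<epsilon> \<le> W z \<and> W z \<le> 1"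
    and sq_G: "integrable (measure_pmf \<mu>) (\<lambda>z. (norm (G z))^2)"
  shows "AE \<omega> in S. (\<lambda>n. est q W G Z n \<omega>) \<longlonglongrightarrow> grad_ell q P (-m)"
    and "0 < n \<Longrightarrow> integrable S (est q W G Z n)"
    and "(\<lambda>n. norm (expectation (est q W G Z n) - grad_ell q P (-m)
          - lead_term q P (-m) (rvar (measure_pmf \<mu>) W) (rcov (measure_pmf \<mu>) G W) n))
        \<in> O(\<lambda>n. 1 / (real n)^2)"
    and "q = 0 \<Longrightarrow> 0 < n \<Longrightarrow> expectation (est q W G Z n) = grad_ell q P (-m)"
proof -
  obtain z\<^sub>0 where "z\<^sub>0 \<in> set_pmf \<mu>"
    using set_pmf_not_empty[of \<mu>] by blast
  then have "\<epsilon> \<le> 1"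
    using W_bounds by force
  \<comment> \<open>W is only controlled on the support of \<mu>, where this truncation does not change it.\<close>
  define W' where "W' z = max \<epsilon> (min 1 (W z))" for z
  have W'_bounds: "\<epsilon> \<le> W' z \<and> W' z \<le> 1" for z
    using \<open>\<epsilon> \<le> 1\<close> by (simp add: W'_def)
  have W'_eq: "W z = W' z" if "z \<in> set_pmf \<mu>" for z
    using W_bounds[OF that] by (simp add: W'_def)
  have "AE \<omega> in S. \<forall>n. est q W G Z n \<omega> = est q W' G Z n \<omega>"
    using AE_Z_in_set_pmf by eventually_elim (simp add: est_def W'_eq)
  then have est_AE_eq: "AE \<omega> in S. est q W G Z n \<omega> = est q W' G Z n \<omega>" for n
    by eventually_elim simp
  have P_eq: "P = measure_pmf.expectation \<mu> W'"
    unfolding P_def by (rule pmf_expectation_cong) (rule W'_eq)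
  have E_est_eq: "expectation (est q W G Z n) = expectation (est q W' G Z n)" for n
    by (rule integral_cong_AE) (simp_all add: est_AE_eq)
  have int_G: "integrable (measure_pmf \<mu>) G"
    using sq_G by (rule integrable_of_square_integrable_norm)
  show "AE \<omega> in S. (\<lambda>n. est q W G Z n \<omega>) \<longlonglongrightarrow> grad_ell q P (-m)"
    using est_AE_tendsto[of \<epsilon> W' G q] W'_bounds \<open>0 < \<epsilon>\<close> sq_G
      \<open>AE \<omega> in S. \<forall>n. est q W G Z n \<omega> = est q W' G Z n \<omega>\<close>
    by (auto simp: P_eq m_def elim: AE_mp)
  show "integrable S (est q W G Z n)" if "0 < n"
    using integrable_est[of \<epsilon> W' q G n] W'_bounds \<open>0 < \<epsilon>\<close> \<open>0 \<le> q\<close> int_G that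
      integrable_cong_AE[OF borel_measurable_est borel_measurable_est est_AE_eq]
    by simp
  show "(\<lambda>n. norm (expectation (est q W G Z n) - grad_ell q P (-m)
        - lead_term q P (-m) (rvar (measure_pmf \<mu>) W) (rcov (measure_pmf \<mu>) G W) n))
      \<in> O(\<lambda>n. 1 / (real n)^2)"
    using bias_expansion[of \<epsilon> W' q G] W'_bounds \<open>0 < \<epsilon>\<close> \<open>0 \<le> q\<close> sq_G
    by (simp add: E_est_eq P_eq m_def rvar_rcov_pmf_cong(1)[of \<mu> W W', OF W'_eq]
      rvar_rcov_pmf_cong(2)[of \<mu> W W' G, OF W'_eq])
  show "expectation (est q W G Z n) = grad_ell q P (-m)" if "q = 0" "0 < n"
    using that E_est_eq[of n] expectation_est_exponent_0[of \<epsilon> W' G n] W'_bounds \<open>0 < \<epsilon>\<close> int_G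
      expectation_pmf_bounds(1)[of \<epsilon> W' 1]
    by (simp add: E_est_eq P_eq m_def grad_ell_def)
qed

end

theorem mainTheorem11:
  fixes pz :: "'a::euclidean_space \<Rightarrow> 'z::countable pmf"
    and w :: "'a \<Rightarrow> 'z \<Rightarrow> real"
    and \<theta>0 :: 'a and L :: "'z \<Rightarrow> 'a" and DP :: 'a
    and q \<epsilon> :: real
    and S :: "'w measure" and Z :: "nat \<Rightarrow> 'w \<Rightarrow> 'z"
  defines "P \<equiv> marg pz w \<theta>0"
    and "wt \<equiv> (\<lambda>z. w \<theta>0 z)"
    and "gt \<equiv> (\<lambda>z. - (w \<theta>0 z *\<^sub>R L z))"
  assumes q_range: "0 \<le> q" "q \<le> 1"
    and w_prob: "\<forall>\<theta> z. 0 \<le> w \<theta> z \<and> w \<theta> z \<le> 1"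
    and L_grad: "\<forall>z \<in> set_pmf (pz \<theta>0).
                   GDERIV (\<lambda>\<theta>. ln (pmf (pz \<theta>) z * w \<theta> z)) \<theta>0 :> L z"
    and P_grad: "GDERIV (marg pz w) \<theta>0 :> DP"
    and P_pos: "P > 0"
    and S_prob: "prob_space S"
    and Z_indep: "prob_space.indep_vars S (\<lambda>_. count_space UNIV) Z UNIV"
    and Z_distr: "\<forall>m. distr S (count_space UNIV) (Z m) = measure_pmf (pz \<theta>0)"
    and g_sq: "\<forall>m. integrable S (\<lambda>\<omega>. (norm (gt (Z m \<omega>)))\<^sup>2)"
    and eps_pos: "\<epsilon> > 0"
    and w_ge_eps: "\<forall>m. AE \<omega> in S. \<epsilon> \<le> wt (Z m \<omega>)"
    and E_w: "\<forall>m. integral\<^sup>L S (\<lambda>\<omega>. wt (Z m \<omega>)) = P"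
    and E_g: "\<forall>m. integral\<^sup>L S (\<lambda>\<omega>. gt (Z m \<omega>)) = - DP"
  shows "(AE \<omega> in S. (\<lambda>M. est q wt gt Z M \<omega>) \<longlonglongrightarrow> grad_ell q P DP)
       \<and> (\<forall>M\<ge>1. integrable S (est q wt gt Z M))
       \<and> (\<lambda>M. norm (integral\<^sup>L S (est q wt gt Z M) - grad_ell q P DP - lead_term q P DP (rvar S (\<lambda>\<omega>. wt (Z 0 \<omega>))) (rcov S (\<lambda>\<omega>. gt (Z 0 \<omega>)) (\<lambda>\<omega>. wt (Z 0 \<omega>))) M))
            \<in> O(\<lambda>M. 1 / (real M)\<^sup>2)
       \<and> (\<forall>C C'. norm ((1 / P) *\<^sub>R DP) \<le> C
                 \<and> (\<forall>z \<in> set_pmf (pz \<theta>0). norm (L z) \<le> C')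
                 \<longrightarrow> (\<forall>M\<ge>1. norm (lead_term q P DP (rvar S (\<lambda>\<omega>. wt (Z 0 \<omega>))) (rcov S (\<lambda>\<omega>. gt (Z 0 \<omega>)) (\<lambda>\<omega>. wt (Z 0 \<omega>))) M) \<le> (C + C') * (q / (real M * P powr q))))
       \<and> (q = 0 \<longrightarrow> (\<forall>M\<ge>1. integral\<^sup>L S (est q wt gt Z M) = grad_ell q P DP))"
proof -
  interpret iid S Z "pz \<theta>0"
    using S_prob Z_indep Z_distr by (simp add: iid_def iid_axioms_def)
  \<comment> \<open>L_grad and P_grad only give L and DP their meaning; the argument works from E_w and E_g.\<close>
  have wt_01: "0 \<le> wt z \<and> wt z \<le> 1" for z
    using w_prob by (simp add: wt_def)
  have wt_bounds: "\<epsilon> \<le> wt z \<and> wt z \<le> 1" if "z \<in> set_pmf (pz \<theta>0)" for z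
    using w_ge_eps[rule_format, of 0] AE_comp_Z_iff[of "\<lambda>z. \<epsilon> \<le> wt z" 0] wt_01 that by auto
  have sq_gt: "integrable (measure_pmf (pz \<theta>0)) (\<lambda>z. (norm (gt z))^2)"
    using g_sq[rule_format, of 0] by (simp add: integrable_comp_Z_iff[of "\<lambda>z. (norm (gt z))^2"])
  have E_wt: "measure_pmf.expectation (pz \<theta>0) wt = P" and E_gt: "measure_pmf.expectation (pz \<theta>0) gt = - DP"
    using E_w[rule_format, of 0] E_g[rule_format, of 0] by (simp_all add: integral_comp_Z)
  note est = est_asymptotics[where W=wt and G=gt, OF eps_pos q_range(1) wt_bounds sq_gt,
      unfolded E_wt E_gt minus_minus]
  have lead_le: "norm (lead_term q P DP (rvar (measure_pmf (pz \<theta>0)) wt) (rcov (measure_pmf (pz \<theta>0)) gt wt) M)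
      \<le> (C + C') * (q / (real M * P powr q))"
    if "norm ((1 / P) *\<^sub>R DP) \<le> C" and L_le: "\<forall>z \<in> set_pmf (pz \<theta>0). norm (L z) \<le> C'" and "1 \<le> M"
    for C C' M
  proof -
    have "norm (gt z) \<le> C' * wt z" if "z \<in> set_pmf (pz \<theta>0)" for z
      using L_le that wt_01[of z] by (auto simp: gt_def wt_def mult.commute[of C'] intro!: mult_left_mono)
    then show ?thesis
      using norm_lead_term_pmf_le[of q "pz \<theta>0" wt M gt C' DP C] integrable_of_square_integrable_norm[OF sq_gt]
        q_range P_pos wt_01 that by (simp add: E_wt)
  qed
  show ?thesis
    using est lead_le unfolding rvar_comp_Z rcov_comp_Z by auto
qed

end
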